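(* Let $T$ be a contraction on a Hilbert space $H$ such that $\sqrt{1-TT^*}$ has finite rank. Define the operator $Q$ on $H \oplus \operatorname{Range}(1-TT^* )$ by the operator matrix $$Q := \begin{bmatrix} T & \sqrt{1-TT^*} \\ 0 & 0 \end{bmatrix}.$$ Then $Q$ is a partial isometry, $K(Q) = K(T)$, $\operatorname{rank}(1-QQ^* ) = \operatorname{rank}(1-TT^* )$, and $\operatorname{rank}(1-Q^*Q) = \operatorname{rank}(1-T^*T)$ (where both sides of the last equality may be infinite).
   Context: For a contraction $T$ on a Hilbert space $H$, write $\Delta_T := \sqrt{1-TT^*}$. When $\Delta_T$ has finite rank, the curvature of $T$ is $$K(T) := \int_{|z|=1} \lim_{r\uparrow 1} (1-r^2)\, \operatorname{tr}\big(\Delta_T (1-rzT^* )^{-1}(1-r\bar z T)^{-1}\Delta_T\big)\, dz,$$ where $dz$ denotes normalized arc-length (Haar probability) measure on the unit circle; the limit exists for almost every $z$ and is bounded by $\operatorname{rank}\Delta_T$. Note that $\operatorname{Range}\sqrt{1-TT^*} = \operatorname{Range}(1-TT^* )$ when the rank is finite. *)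

theory Defs
  imports "HOL-Analysis.Analysis"
begin

text \<open>The library only provides real inner product spaces, so complex Hilbert spaces
are introduced here as a type class.\<close>

class complex_vector = real_vector +
  fixes scaleC :: "complex \<Rightarrow> 'a \<Rightarrow> 'a"  (infixr \<open>*\<^sub>C\<close> 75)
  assumes scaleC_add_right: "a *\<^sub>C (x + y) = a *\<^sub>C x + a *\<^sub>C y"
    and scaleC_add_left: "(a + b) *\<^sub>C x = a *\<^sub>C x + b *\<^sub>C x"
    and scaleC_scaleC: "a *\<^sub>C (b *\<^sub>C x) = (a * b) *\<^sub>C x"
    and scaleC_one: "1 *\<^sub>C x = x"
    and scaleR_scaleC: "r *\<^sub>R x = complex_of_real r *\<^sub>C x"

class complex_inner = complex_vector + real_normed_vector +
  fixes cinner :: "'a \<Rightarrow> 'a \<Rightarrow> complex"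
  assumes cinner_commute: "cinner x y = cnj (cinner y x)"
    and cinner_add_left: "cinner (x + y) z = cinner x z + cinner y z"
    and cinner_scaleC_left: "cinner (a *\<^sub>C x) y = a * cinner x y"
    and cinner_ge_zero: "0 \<le> Re (cinner x x)"
    and cinner_eq_zero_iff: "cinner x x = 0 \<longleftrightarrow> x = 0"
    and norm_eq_sqrt_cinner: "norm x = sqrt (Re (cinner x x))"

class chilbert = complex_inner + complete_space

global_interpretation complex_vector: vector_space "scaleC :: complex \<Rightarrow> 'a \<Rightarrow> 'a :: complex_vector"
  defines cspan_raw_def: cspan = complex_vector.span
    and cdim_raw_def: cdim = complex_vector.dim
  by unfold_locales (auto simp: scaleC_add_right scaleC_add_left scaleC_scaleC scaleC_one)

instantiation prod :: (complex_vector, complex_vector) complex_vector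
begin
definition scaleC_prod_def: "a *\<^sub>C x = (a *\<^sub>C fst x, a *\<^sub>C snd x)"
instance
  by standard (auto simp: scaleC_prod_def scaleC_add_right scaleC_add_left scaleC_scaleC
      scaleC_one scaleR_prod_def scaleR_scaleC)
end

lemma cinner_self_real: "cinner x x = complex_of_real (Re (cinner x x))"
proof -
  have "cinner x x = cnj (cinner x x)" by (rule cinner_commute)
  hence "Im (cinner x x) = 0" by (metis cnj.simps(2) neg_equal_zero)
  thus ?thesis by (simp add: complex_eq_iff)
qed

lemma cinner_zero_zero: "cinner 0 0 = 0"
  using cinner_eq_zero_iff by blast

lemma Re_cinner_self_norm: "Re (cinner x x) = (norm x)\<^sup>2"
  by (simp add: norm_eq_sqrt_cinner cinner_ge_zero)

instantiation prod :: (complex_inner, complex_inner) complex_inner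
begin
definition cinner_prod_def: "cinner x y = cinner (fst x) (fst y) + cinner (snd x) (snd y)"
instance
proof
  fix x y z :: "'a \<times> 'b" and a :: complex
  show "cinner x y = cnj (cinner y x)"
    by (simp add: cinner_prod_def) (metis cinner_commute)
  show "cinner (x + y) z = cinner x z + cinner y z"
    by (simp add: cinner_prod_def cinner_add_left)
  show "cinner (a *\<^sub>C x) y = a * cinner x y"
    by (simp add: cinner_prod_def scaleC_prod_def cinner_scaleC_left distrib_left)
  show "0 \<le> Re (cinner x x)"
    by (simp add: cinner_prod_def cinner_ge_zero add_nonneg_nonneg)
  show "cinner x x = 0 \<longleftrightarrow> x = 0"
  proof
    assume h: "cinner x x = 0"
    have "Re (cinner (fst x) (fst x)) + Re (cinner (snd x) (snd x)) = 0"
      using h by (metis cinner_prod_def plus_complex.sel(1) zero_complex.sel(1))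
    hence "Re (cinner (fst x) (fst x)) = 0 \<and> Re (cinner (snd x) (snd x)) = 0"
      using cinner_ge_zero[of "fst x"] cinner_ge_zero[of "snd x"] by linarith
    hence "cinner (fst x) (fst x) = 0 \<and> cinner (snd x) (snd x) = 0"
      by (metis cinner_self_real of_real_0)
    thus "x = 0" by (simp add: cinner_eq_zero_iff prod_eq_iff)
  qed (simp add: cinner_prod_def cinner_zero_zero)
  show "norm x = sqrt (Re (cinner x x))"
    by (simp add: norm_prod_def cinner_prod_def Re_cinner_self_norm)
qed
end

instance prod :: (chilbert, chilbert) chilbert ..

text \<open>An operator on the Hilbert space \<open>M\<close> (a closed complex subspace of the ambient
type, e.g. \<open>UNIV\<close>) is represented by a function \<open>'a \<Rightarrow> 'a\<close>; only its values on \<open>M\<close> matter.\<close>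

definition bop_on :: "'a::chilbert set \<Rightarrow> ('a \<Rightarrow> 'a) \<Rightarrow> bool" where
  "bop_on M A \<longleftrightarrow> (\<forall>x\<in>M. A x \<in> M) \<and> (\<forall>x\<in>M. \<forall>y\<in>M. A (x + y) = A x + A y)
     \<and> (\<forall>c. \<forall>x\<in>M. A (c *\<^sub>C x) = c *\<^sub>C A x) \<and> (\<exists>K. \<forall>x\<in>M. norm (A x) \<le> K * norm x)"

text \<open>Hilbert space adjoint (unique on \<open>M\<close> by the Riesz representation theorem).\<close>
definition adjoint_on :: "'a::chilbert set \<Rightarrow> ('a \<Rightarrow> 'a) \<Rightarrow> ('a \<Rightarrow> 'a)" where
  "adjoint_on M A = (SOME B. (\<forall>y\<in>M. B y \<in> M) \<and> (\<forall>x\<in>M. \<forall>y\<in>M. cinner (A x) y = cinner x (B y)))"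

definition inv_on :: "'a::chilbert set \<Rightarrow> ('a \<Rightarrow> 'a) \<Rightarrow> ('a \<Rightarrow> 'a)" where
  "inv_on M A = (SOME B. \<forall>x\<in>M. B x \<in> M \<and> A (B x) = x \<and> B (A x) = x)"

definition sqrt_on :: "'a::chilbert set \<Rightarrow> ('a \<Rightarrow> 'a) \<Rightarrow> ('a \<Rightarrow> 'a)" where
  "sqrt_on M P = (SOME S. bop_on M S \<and> (\<forall>x\<in>M. Im (cinner (S x) x) = 0 \<and> 0 \<le> Re (cinner (S x) x))
        \<and> (\<forall>x\<in>M. S (S x) = P x))"

definition defect_on :: "'a::chilbert set \<Rightarrow> ('a \<Rightarrow> 'a) \<Rightarrow> ('a \<Rightarrow> 'a)" where
  "defect_on M T = sqrt_on M (\<lambda>x. x - T (adjoint_on M T x))"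

definition rank_on :: "'a::chilbert set \<Rightarrow> ('a \<Rightarrow> 'a) \<Rightarrow> enat" where
  "rank_on M A = (if \<exists>B. finite B \<and> A ` M \<subseteq> cspan B then enat (cdim (A ` M)) else \<infinity>)"

definition corthonormal :: "'a::chilbert set \<Rightarrow> bool" where
  "corthonormal B \<longleftrightarrow> (\<forall>e\<in>B. cinner e e = 1) \<and> (\<forall>e\<in>B. \<forall>f\<in>B. e \<noteq> f \<longrightarrow> cinner e f = 0)"

text \<open>Trace of a finite rank operator on \<open>M\<close>: computed in any finite orthonormal
system in \<open>M\<close> whose span contains the range (this is independent of the choice).\<close>
definition trace_on :: "'a::chilbert set \<Rightarrow> ('a \<Rightarrow> 'a) \<Rightarrow> complex" where
  "trace_on M A = (let B = (SOME B. finite B \<and> B \<subseteq> M \<and> corthonormal B \<and> A ` M \<subseteq> cspan B)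
     in (\<Sum>e\<in>B. cinner (A e) e))"

definition partial_isometry_on :: "'a::chilbert set \<Rightarrow> ('a \<Rightarrow> 'a) \<Rightarrow> bool" where
  "partial_isometry_on M Q \<longleftrightarrow> bop_on M Q \<and>
     (\<forall>x\<in>M. (\<forall>y\<in>M. Q y = 0 \<longrightarrow> cinner x y = 0) \<longrightarrow> norm (Q x) = norm x)"

text \<open>Curvature; the normalized Haar measure on the circle is written as
\<open>dt/(2\<pi>)\<close> on \<open>[0, 2\<pi>]\<close> with \<open>z = e^{it}\<close>.\<close>
definition curvature_on :: "'a::chilbert set \<Rightarrow> ('a \<Rightarrow> 'a) \<Rightarrow> complex" where
  "curvature_on M T =
     (let D = defect_on M T; Ts = adjoint_on M T;
          k = (\<lambda>z::complex. Lim (at_left (1::real))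
                 (\<lambda>r. complex_of_real (1 - r\<^sup>2) *
                    trace_on M (\<lambda>x. D (inv_on M (\<lambda>y. y - (complex_of_real r * z) *\<^sub>C Ts y)
                                   (inv_on M (\<lambda>y. y - (complex_of_real r * cnj z) *\<^sub>C T y) (D x))))))
      in complex_of_real (1 / (2 * pi)) * (LINT t:{0..2*pi}|lborel. k (cis t)))"

end

theory Submission
  imports Defs "HOL-Computational_Algebra.Formal_Power_Series"
begin

text \<open>
  Write \<open>T\<^sup>*\<close> for the adjoint of \<open>T\<close>, \<open>D = sqrt (1 - T T\<^sup>*)\<close> and \<open>R = Range (1 - T T\<^sup>*)\<close>,
  which equals \<open>Range D\<close> because \<open>D\<close> has finite rank. One checks \<open>Q\<^sup>* (u, v) = (T\<^sup>* u, D u)\<close>,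
  so \<open>Q Q\<^sup>* = 1 \<oplus> 0\<close> and \<open>1 - Q Q\<^sup>*\<close> is the orthogonal projection onto \<open>0 \<oplus> R\<close>. Being its
  own positive square root, this projection is the defect operator of \<open>Q\<close>; the partial
  isometry property and the first rank identity follow. The range of \<open>1 - Q\<^sup>* Q\<close> is the
  kernel of \<open>Q\<close>, which the first projection maps bijectively onto \<open>Range (1 - T\<^sup>* T)\<close>.
  For the curvature, solving the triangular resolvent equations of \<open>Q\<close> shows that the
  operator under the trace in the definition of \<open>K(Q)\<close> is \<open>0 \<oplus> (1 + r\<^sup>2 K\<^sub>r)\<close> on \<open>H \<oplus> R\<close>,
  where \<open>K\<^sub>r\<close> is the corresponding operator for \<open>T\<close>. Its trace is \<open>dim R + r\<^sup>2 tr K\<^sub>r\<close>,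
  and the factor \<open>1 - r\<^sup>2\<close> removes \<open>dim R\<close> as \<open>r \<rightarrow> 1\<close>.

  Adjoints, square roots, inverses and traces are defined by choice, so each use rests on an
  existence argument: the Riesz representation theorem, the binomial series of
  \<open>sqrt (1 - x)\<close>, Neumann series, and Gram-Schmidt orthonormalisation together with the
  basis independence of the trace.
\<close>

instance chilbert \<subseteq> banach ..

section \<open>Complex inner products\<close>

lemma cinner_add_right: "cinner x (y + z) = cinner x y + cinner x z"
  by (metis cinner_add_left cinner_commute complex_cnj_add)

lemma cinner_scaleC_right: "cinner x (a *\<^sub>C y) = cnj a * cinner x y"
  by (metis cinner_commute cinner_scaleC_left complex_cnj_mult)

lemma cinner_zero_left [simp]: "cinner 0 y = 0"
  using cinner_add_left[of 0 0 y] by simp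

lemma cinner_zero_right [simp]: "cinner x 0 = 0"
  by (subst cinner_commute) simp

lemma cinner_minus_left: "cinner (- x) y = - cinner x y"
  using cinner_add_left[of x "- x" y] by (simp add: eq_neg_iff_add_eq_0 add.commute)

lemma cinner_minus_right: "cinner x (- y) = - cinner x y"
  by (metis cinner_commute cinner_minus_left complex_cnj_minus)

lemma cinner_diff_left: "cinner (x - y) z = cinner x z - cinner y z"
  using cinner_add_left[of x "- y" z] by (simp add: cinner_minus_left)

lemma cinner_diff_right: "cinner x (y - z) = cinner x y - cinner x z"
  using cinner_add_right[of x y "- z"] by (simp add: cinner_minus_right)

lemma cinner_sum_left: "cinner (\<Sum>i\<in>A. f i) y = (\<Sum>i\<in>A. cinner (f i) y)"
  by (induction A rule: infinite_finite_induct) (auto simp: cinner_add_left)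

lemma cinner_sum_right: "cinner x (\<Sum>i\<in>A. f i) = (\<Sum>i\<in>A. cinner x (f i))"
  by (induction A rule: infinite_finite_induct) (auto simp: cinner_add_right)

lemma cnj_cinner: "cnj (cinner x y) = cinner y x"
  by (metis cinner_commute)

lemma cinner_self_norm: "cinner x x = complex_of_real ((norm x)\<^sup>2)"
  using cinner_self_real[of x] by (simp add: Re_cinner_self_norm)

lemma Im_cinner_self [simp]: "Im (cinner x x) = 0"
  by (simp add: cinner_self_norm)

lemma cinner_scaleR_left: "cinner (r *\<^sub>R x) y = complex_of_real r * cinner x y"
  by (simp add: scaleR_scaleC cinner_scaleC_left)

lemma cinner_scaleR_right: "cinner x (r *\<^sub>R y) = complex_of_real r * cinner x y"
  by (simp add: scaleR_scaleC cinner_scaleC_right)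

lemma cinner_Pair: "cinner (a, b) (c, d) = cinner a c + cinner b d"
  by (simp add: cinner_prod_def)

lemma scaleC_Pair: "c *\<^sub>C (a, b) = (c *\<^sub>C a, c *\<^sub>C b)"
  by (simp add: scaleC_prod_def)

lemma power2_norm_add: "(norm (x + y))\<^sup>2 = (norm x)\<^sup>2 + (norm y)\<^sup>2 + 2 * Re (cinner x y)"
proof -
  have "Re (cinner (x+y) (x+y)) = Re (cinner x x) + Re (cinner y y) + Re (cinner x y) + Re (cinner y x)"
    by (simp add: cinner_add_left cinner_add_right)
  moreover have "Re (cinner y x) = Re (cinner x y)"
    by (subst cinner_commute) simp
  ultimately show ?thesis by (simp add: Re_cinner_self_norm)
qed

lemma parallelogram_law:
  "(norm ((x::'a::complex_inner) - y))\<^sup>2 = 2 * (norm x)\<^sup>2 + 2 * (norm y)\<^sup>2 - (norm (x + y))\<^sup>2"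
  using power2_norm_add[of x y] power2_norm_add[of x "- y"] by (simp add: cinner_minus_right)

lemma cmod_cinner_le: "cmod (cinner x y) \<le> norm x * norm y"
proof (cases "y = 0")
  case True then show ?thesis by simp
next
  case False
  define c where "c = cinner x y / complex_of_real ((norm y)\<^sup>2)"
  have ny: "norm y > 0" using False by simp
  have "0 \<le> Re (cinner (x - c *\<^sub>C y) (x - c *\<^sub>C y))" by (rule cinner_ge_zero)
  also have "cinner (x - c *\<^sub>C y) (x - c *\<^sub>C y) = cinner x x - cnj c * cinner x y - c * cinner y x + c * cnj c * cinner y y"
    by (simp add: cinner_diff_left cinner_diff_right cinner_scaleC_left cinner_scaleC_right algebra_simps)
  also have "\<dots> = cinner x x - cnj c * cinner x y"
    using ny by (simp add: c_def cinner_self_norm cinner_commute[of y x] power2_eq_square field_simps)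
  finally have "0 \<le> Re (cinner x x - cnj c * cinner x y)" .
  moreover have "Re (cnj c * cinner x y) = (cmod (cinner x y))\<^sup>2 / (norm y)\<^sup>2"
  proof -
    have "cnj c * cinner x y = (cnj (cinner x y) * cinner x y) / complex_of_real ((norm y)\<^sup>2)"
      by (simp add: c_def)
    also have "\<dots> = complex_of_real ((cmod (cinner x y))\<^sup>2 / (norm y)\<^sup>2)"
      using complex_norm_square[of "cinner x y"] by (simp add: mult.commute)
    finally show ?thesis by simp
  qed
  ultimately have "(cmod (cinner x y))\<^sup>2 / (norm y)\<^sup>2 \<le> (norm x)\<^sup>2"
    by (simp add: Re_cinner_self_norm)
  then have "(cmod (cinner x y))\<^sup>2 \<le> (norm x)\<^sup>2 * (norm y)\<^sup>2"
    using ny by (simp add: divide_le_eq)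
  then have "(cmod (cinner x y))\<^sup>2 \<le> (norm x * norm y)\<^sup>2"
    by (simp add: power_mult_distrib)
  then show ?thesis
    using power2_le_imp_le[of "cmod (cinner x y)" "norm x * norm y"] by simp
qed

lemma norm_scaleC: "norm (a *\<^sub>C (x::'a::complex_inner)) = cmod a * norm x"
proof -
  have "(norm (a *\<^sub>C x))\<^sup>2 = Re (cinner (a *\<^sub>C x) (a *\<^sub>C x))" by (simp add: Re_cinner_self_norm)
  also have "\<dots> = Re (a * cnj a * cinner x x)" by (simp add: cinner_scaleC_left cinner_scaleC_right mult.assoc)
  also have "\<dots> = (cmod a * norm x)\<^sup>2"
    by (simp add: cinner_self_norm complex_mult_cnj power_mult_distrib cmod_power2)
  finally show ?thesis
    using power2_eq_iff_nonneg[of "norm (a *\<^sub>C x)" "cmod a * norm x"] by simp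
qed

lemma bounded_linear_cinner_left: "bounded_linear (\<lambda>x. cinner x y)"
proof (rule bounded_linear_intro[where K = "norm y"])
  show "cinner (r *\<^sub>R x) y = r *\<^sub>R cinner x y" for r x
    by (simp add: cinner_scaleR_left scaleR_conv_of_real)
  show "norm (cinner x y) \<le> norm x * norm y" for x
    using cmod_cinner_le[of x y] by simp
qed (rule cinner_add_left)

lemma bounded_linear_scaleC_right: "bounded_linear (\<lambda>v::'a::complex_inner. c *\<^sub>C v)"
  by (rule bounded_linear_intro[where K = "cmod c"])
    (auto simp: scaleC_add_right norm_scaleC scaleR_scaleC scaleC_scaleC mult.commute)

lemma cinner_eq_right: "(\<And>x. cinner x u = cinner x v) \<Longrightarrow> u = v"
  by (metis cinner_diff_right cinner_eq_zero_iff eq_iff_diff_eq_0)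

section \<open>Riesz representation\<close>

lemma quadratic_nonneg_imp_linear_coeff_zero:
  fixes a b :: real
  assumes nonneg: "\<And>s. 0 \<le> a * s\<^sup>2 + b * s"
  shows "b = 0"
proof (rule ccontr)
  assume "b \<noteq> 0"
  define c where "c = \<bar>a\<bar> + 1"
  have "c > 0" "a < c"
    by (auto simp: c_def)
  then have "c\<^sup>2 * (a * (- b / c)\<^sup>2 + b * (- b / c)) = b\<^sup>2 * (a - c)"
    by (simp add: power2_eq_square field_simps)
  also have "\<dots> < 0"
    using \<open>b \<noteq> 0\<close> \<open>a < c\<close> by (simp add: mult_pos_neg)
  finally show False
    using nonneg[of "- b / c"] \<open>c > 0\<close> by (simp add: mult_less_0_iff)
qed

lemma midpoint_minimizing_sequence_Cauchy:
  fixes xs :: "nat \<Rightarrow> 'a::complex_inner"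
  assumes mid: "\<And>m n. d \<le> norm ((1/2) *\<^sub>R (xs m + xs n))"
    and lim: "(\<lambda>n. norm (xs n)) \<longlonglongrightarrow> d"
  shows "Cauchy xs"
proof (rule metric_CauchyI)
  fix \<epsilon> :: real
  assume "\<epsilon> > 0"
  have "(\<lambda>n. (norm (xs n))\<^sup>2) \<longlonglongrightarrow> d\<^sup>2"
    using lim by (intro tendsto_intros)
  then have "\<forall>\<^sub>F n in sequentially. (norm (xs n))\<^sup>2 < d\<^sup>2 + \<epsilon>\<^sup>2 / 4"
    using \<open>\<epsilon> > 0\<close> by (intro order_tendstoD(2)) auto
  then obtain N where N: "\<And>n. n \<ge> N \<Longrightarrow> (norm (xs n))\<^sup>2 < d\<^sup>2 + \<epsilon>\<^sup>2 / 4"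
    by (auto simp: eventually_sequentially)
  have d0: "0 \<le> d"
    using LIMSEQ_le_const[OF lim] by auto
  have "dist (xs m) (xs n) < \<epsilon>" if "m \<ge> N" "n \<ge> N" for m n
  proof -
    have "2 * d \<le> norm (xs m + xs n)"
      using mid[of m n] by simp
    then have "(2 * d)\<^sup>2 \<le> (norm (xs m + xs n))\<^sup>2"
      using d0 by (intro power_mono) auto
    then have "(norm (xs m - xs n))\<^sup>2 < \<epsilon>\<^sup>2"
      using parallelogram_law[of "xs m" "xs n"] N[OF that(1)] N[OF that(2)]
      by (simp add: power_mult_distrib)
    then show ?thesis
      using \<open>\<epsilon> > 0\<close> by (simp add: dist_norm power2_less_imp_less)
  qed
  then show "\<exists>M. \<forall>m\<ge>M. \<forall>n\<ge>M. dist (xs m) (xs n) < \<epsilon>"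
    by blast
qed

lemma closed_midpoint_convex_min_norm:
  fixes C :: "'a::chilbert set"
  assumes "closed C" "C \<noteq> {}"
    and mid: "\<And>x y. x \<in> C \<Longrightarrow> y \<in> C \<Longrightarrow> (1/2) *\<^sub>R (x + y) \<in> C"
  shows "\<exists>L\<in>C. \<forall>c\<in>C. norm L \<le> norm c"
proof -
  define d where "d = Inf (norm ` C)"
  have d_le: "d \<le> norm c" if "c \<in> C" for c
    unfolding d_def using that by (intro cInf_lower) (auto intro: bdd_belowI[of _ 0])
  have "\<exists>x\<in>C. norm x < d + inverse (real (Suc n))" for n
    using cInf_lessD[of "norm ` C" "d + inverse (real (Suc n))"] \<open>C \<noteq> {}\<close> by (auto simp: d_def)
  then obtain xs where xs: "\<And>n. xs n \<in> C" "\<And>n. norm (xs n) < d + inverse (real (Suc n))"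
    by metis
  have "d \<le> norm (xs n)" "norm (xs n) \<le> d + inverse (real (Suc n))" for n
    using d_le[OF xs(1)] xs(2)[of n] by auto
  then have lim: "(\<lambda>n. norm (xs n)) \<longlonglongrightarrow> d"
    by (intro real_tendsto_sandwich[OF _ _ tendsto_const LIMSEQ_inverse_real_of_nat_add])
      (auto intro: always_eventually)
  have "Cauchy xs"
    using xs(1) by (intro midpoint_minimizing_sequence_Cauchy[OF _ lim] d_le mid)
  then obtain L where L: "xs \<longlonglongrightarrow> L"
    using Cauchy_convergent_iff convergent_def by blast
  have "L \<in> C"
    using \<open>closed C\<close> xs(1) L by (rule closed_sequentially)
  moreover have "norm L \<le> d"
    using LIMSEQ_unique[OF tendsto_norm[OF L] lim] by simp
  ultimately show ?thesis
    using d_le by force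
qed

lemma min_norm_imp_orthogonal:
  fixes L k :: "'a::complex_inner"
  assumes min: "\<And>t. norm L \<le> norm (L + t *\<^sub>C k)"
  shows "cinner L k = 0"
proof -
  have gen: "0 \<le> (cmod t)\<^sup>2 * (norm k)\<^sup>2 + 2 * Re (cnj t * cinner L k)" for t
  proof -
    have "(norm L)\<^sup>2 \<le> (norm (L + t *\<^sub>C k))\<^sup>2"
      using min[of t] by (simp add: power_mono)
    then show ?thesis
      by (simp add: power2_norm_add norm_scaleC cinner_scaleC_right power_mult_distrib)
  qed
  have "0 \<le> (norm k)\<^sup>2 * s\<^sup>2 + (2 * Re (cinner L k)) * s" for s
    using gen[of "complex_of_real s"] by (simp add: algebra_simps)
  then have "Re (cinner L k) = 0"
    using quadratic_nonneg_imp_linear_coeff_zero by fastforce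
  moreover have "0 \<le> (norm k)\<^sup>2 * s\<^sup>2 + (2 * Im (cinner L k)) * s" for s
    using gen[of "\<i> * complex_of_real s"] by (simp add: algebra_simps norm_mult)
  then have "Im (cinner L k) = 0"
    using quadratic_nonneg_imp_linear_coeff_zero by fastforce
  ultimately show ?thesis
    by (simp add: complex_eq_iff)
qed

lemma level_set_min_norm:
  fixes \<phi> :: "'a::chilbert \<Rightarrow> complex"
  assumes "bounded_linear \<phi>" and scale: "\<And>c x. \<phi> (c *\<^sub>C x) = c * \<phi> x" and "\<phi> x0 \<noteq> 0"
  shows "\<exists>L. \<phi> L = 1 \<and> (\<forall>c. \<phi> c = 1 \<longrightarrow> norm L \<le> norm c)"
proof -
  interpret \<phi>: bounded_linear \<phi> by fact
  define C where "C = \<phi> -` {1}"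
  have "closed C"
    unfolding C_def by (intro closed_vimage closed_singleton linear_continuous_on assms(1))
  moreover have "inverse (\<phi> x0) *\<^sub>C x0 \<in> C"
    using \<open>\<phi> x0 \<noteq> 0\<close> by (simp add: C_def scale)
  then have "C \<noteq> {}"
    by blast
  moreover have "(1/2) *\<^sub>R (x + y) \<in> C" if "x \<in> C" "y \<in> C" for x y
    using that by (simp add: C_def \<phi>.add \<phi>.scale scaleR_conv_of_real)
  ultimately have "\<exists>L\<in>C. \<forall>c\<in>C. norm L \<le> norm c"
    by (rule closed_midpoint_convex_min_norm)
  then show ?thesis
    by (auto simp: C_def)
qed

text \<open>The representing vector is a multiple of the element of least norm in the level set
  \<open>\<phi> x = 1\<close>, which is orthogonal to the kernel of \<open>\<phi>\<close>.\<close>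

lemma riesz_representation:
  fixes \<phi> :: "'a::chilbert \<Rightarrow> complex"
  assumes add: "\<And>x y. \<phi> (x + y) = \<phi> x + \<phi> y"
    and scale: "\<And>c x. \<phi> (c *\<^sub>C x) = c * \<phi> x"
    and bound: "\<And>x. cmod (\<phi> x) \<le> K * norm x"
  shows "\<exists>v. \<forall>x. \<phi> x = cinner x v"
proof (cases "\<forall>x. \<phi> x = 0")
  case True
  then show ?thesis
    by (intro exI[of _ 0]) simp
next
  case False
  then obtain x0 where "\<phi> x0 \<noteq> 0"
    by auto
  have "bounded_linear \<phi>"
    by (rule bounded_linear_intro[where K = K])
      (auto simp: add scale bound mult.commute scaleR_scaleC scaleR_conv_of_real)
  then obtain L where L: "\<phi> L = 1" "\<And>c. \<phi> c = 1 \<Longrightarrow> norm L \<le> norm c"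
    using level_set_min_norm[OF _ scale \<open>\<phi> x0 \<noteq> 0\<close>] by blast
  have orth: "cinner L k = 0" if "\<phi> k = 0" for k
    using that L by (intro min_norm_imp_orthogonal) (simp add: add scale)
  have "L \<noteq> 0"
    using L(1) add[of 0 0] by auto
  have "\<phi> x = cinner x ((1 / (norm L)\<^sup>2) *\<^sub>R L)" for x
  proof -
    have "\<phi> (x - \<phi> x *\<^sub>C L) = 0"
      using add[of "x - \<phi> x *\<^sub>C L" "\<phi> x *\<^sub>C L"] scale[of "\<phi> x" L] L(1) by simp
    then have "cinner L (x - \<phi> x *\<^sub>C L) = 0"
      by (rule orth)
    then have "cinner (x - \<phi> x *\<^sub>C L) L = 0"
      by (metis cnj_cinner complex_cnj_zero)
    then have "cinner x L = \<phi> x * complex_of_real ((norm L)\<^sup>2)"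
      by (simp add: cinner_diff_left cinner_scaleC_left cinner_self_norm)
    then show ?thesis
      using \<open>L \<noteq> 0\<close> by (simp add: cinner_scaleR_right)
  qed
  then show ?thesis
    by blast
qed

section \<open>The binomial series of \<open>sqrt (1 - x)\<close>\<close>

text \<open>\<open>sqrt (1 - x) = (\<Sum>n. sqrt_coeff n * x ^ n)\<close> for \<open>\<bar>x\<bar> \<le> 1\<close>.\<close>

definition sqrt_coeff :: "nat \<Rightarrow> real" where
  "sqrt_coeff n = (-1) ^ n * ((1/2) gchoose n)"

lemma sqrt_coeff_0 [simp]: "sqrt_coeff 0 = 1"
  by (simp add: sqrt_coeff_def)

lemma sqrt_coeff_Suc: "sqrt_coeff (Suc n) = sqrt_coeff n * (real n - 1/2) / (real n + 1)"
proof -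
  define g where "g = (1/2::real) gchoose n"
  define g1 where "g1 = (1/2::real) gchoose (Suc n)"
  have "(1/2) * g = real n * g + (real n + 1) * g1"
    using gbinomial_mult_1[of "1/2::real" n] by (simp add: g_def g1_def add.commute)
  then have "g1 = g * (1/2 - real n) / (real n + 1)"
    by (simp add: field_simps)
  then have "(-1) ^ Suc n * g1 = ((-1) ^ n * g) * (real n - 1/2) / (real n + 1)"
    by (simp add: algebra_simps minus_divide_left[symmetric])
  then show ?thesis
    unfolding sqrt_coeff_def g_def[symmetric] g1_def[symmetric] .
qed

lemma sqrt_coeff_nonpos: "n \<ge> 1 \<Longrightarrow> sqrt_coeff n \<le> 0"
proof (induction n rule: nat_induct_at_least)
  case base
  then show ?case
    by (simp add: sqrt_coeff_def)
next
  case (Suc n)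
  then show ?case
    by (simp add: sqrt_coeff_Suc divide_nonpos_pos mult_nonpos_nonneg)
qed

lemma sum_sqrt_coeff_atMost: "(\<Sum>k\<le>N. sqrt_coeff k) = -2 * (real N + 1) * sqrt_coeff (Suc N)"
proof (induction N)
  case 0
  then show ?case
    by (simp add: sqrt_coeff_Suc)
next
  case (Suc N)
  then have "(\<Sum>k\<le>Suc N. sqrt_coeff k) = -2 * (real N + 1) * sqrt_coeff (Suc N) + sqrt_coeff (Suc N)"
    by simp
  also have "\<dots> = -2 * (real (Suc N) + 1) * sqrt_coeff (Suc (Suc N))"
    unfolding sqrt_coeff_Suc[of "Suc N"] by (simp add: field_simps)
  finally show ?case .
qed

lemma sum_sqrt_coeff_atMost_nonneg: "0 \<le> (\<Sum>k\<le>N. sqrt_coeff k)"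
  unfolding sum_sqrt_coeff_atMost using sqrt_coeff_nonpos[of "Suc N"] by (simp add: mult_nonpos_nonpos)

lemma sum_abs_sqrt_coeff_atMost: "(\<Sum>k\<le>N. \<bar>sqrt_coeff k\<bar>) = 2 - (\<Sum>k\<le>N. sqrt_coeff k)"
proof (induction N)
  case (Suc N)
  then show ?case
    using sqrt_coeff_nonpos[of "Suc N"] by simp
qed simp

lemma summable_abs_sqrt_coeff: "summable (\<lambda>n. \<bar>sqrt_coeff n\<bar>)"
proof (rule summableI_nonneg_bounded[where x = 2])
  show "(\<Sum>k<n. \<bar>sqrt_coeff k\<bar>) \<le> 2" for n
    using sum_abs_sqrt_coeff_atMost[of "n - 1"] sum_sqrt_coeff_atMost_nonneg[of "n - 1"]
    by (cases n) (simp_all add: lessThan_Suc_atMost)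
qed simp

lemma summable_sqrt_coeff: "summable sqrt_coeff"
  using summable_abs_sqrt_coeff summable_rabs_cancel by blast

lemma suminf_sqrt_coeff_nonneg: "0 \<le> suminf sqrt_coeff"
proof (rule LIMSEQ_le_const[OF summable_LIMSEQ[OF summable_sqrt_coeff]])
  have "0 \<le> (\<Sum>k<n. sqrt_coeff k)" for n
    using sum_sqrt_coeff_atMost_nonneg[of "n - 1"] by (cases n) (simp_all add: lessThan_Suc_atMost)
  then show "\<exists>N. \<forall>n\<ge>N. 0 \<le> (\<Sum>k<n. sqrt_coeff k)"
    by blast
qed

text \<open>By Vandermonde's identity the Cauchy square of the series is \<open>1 - x\<close>.\<close>

lemma sqrt_coeff_convolution: "(\<Sum>i\<le>k. sqrt_coeff i * sqrt_coeff (k - i)) = (if k = 0 then 1 else if k = 1 then -1 else 0)"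
proof -
  have "(\<Sum>i\<le>k. sqrt_coeff i * sqrt_coeff (k - i)) = (\<Sum>i\<le>k. (-1)^k * (((1/2::real) gchoose i) * ((1/2) gchoose (k - i))))"
  proof (rule sum.cong)
    fix i assume "i \<in> {..k}"
    then have "(-1::real) ^ i * (-1) ^ (k - i) = (-1) ^ k"
      by (simp add: power_add[symmetric])
    moreover have "sqrt_coeff i * sqrt_coeff (k - i)
        = ((-1) ^ i * (-1) ^ (k - i)) * (((1/2) gchoose i) * ((1/2) gchoose (k - i)))"
      by (simp add: sqrt_coeff_def mult_ac)
    ultimately show "sqrt_coeff i * sqrt_coeff (k - i) = (-1)^k * (((1/2::real) gchoose i) * ((1/2) gchoose (k - i)))"
      by simp
  qed simp
  also have "\<dots> = (-1)^k * (\<Sum>i=0..k. ((1/2::real) gchoose i) * ((1/2) gchoose (k - i)))"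
    by (simp add: sum_distrib_left atLeast0AtMost)
  also have "\<dots> = (-1)^k * ((1::real) gchoose k)"
    using gbinomial_Vandermonde[of "1/2::real" "1/2" k] by simp
  also have "(1::real) gchoose k = of_nat (1 choose k)"
    using binomial_gbinomial[of 1 k, where 'a=real] by simp
  also have "(-1)^k * real (1 choose k) = (if k = 0 then 1 else if k = 1 then -1 else 0)"
    by (cases k) (auto simp: binomial_eq_0)
  finally show ?thesis .
qed

lemma Cauchy_product_square_minus_triangle:
  fixes a :: "nat \<Rightarrow> 'a::real_normed_vector" and b :: "nat \<Rightarrow> 'b::real_normed_vector"
  assumes a: "summable (\<lambda>k. norm (a k))" and b: "summable (\<lambda>k. norm (b k))"
  shows "(\<lambda>n. \<Sum>(i, j)\<in>{..<n} \<times> {..<n} - {(i, j). i + j < n}. norm (a i) * norm (b j)) \<longlonglongrightarrow> 0"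
proof -
  define f where "f = (\<lambda>(i, j). norm (a i) * norm (b j))"
  have sub: "{(i, j). i + j < n} \<subseteq> {..<n} \<times> {..<n}" for n :: nat
    by auto
  have "(\<lambda>n. (\<Sum>k<n. norm (a k)) * (\<Sum>k<n. norm (b k))) \<longlonglongrightarrow> (\<Sum>k. norm (a k)) * (\<Sum>k. norm (b k))"
    using a b by (intro tendsto_mult summable_LIMSEQ)
  then have square: "(\<lambda>n. sum f ({..<n} \<times> {..<n})) \<longlonglongrightarrow> (\<Sum>k. norm (a k)) * (\<Sum>k. norm (b k))"
    by (simp add: f_def sum.cartesian_product sum_product)
  have "(\<lambda>k. \<Sum>i\<le>k. norm (a i) * norm (b (k - i))) sums ((\<Sum>k. norm (a k)) * (\<Sum>k. norm (b k)))"
    using a b by (intro Cauchy_product_sums) simp_all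
  then have triangle: "(\<lambda>n. sum f {(i, j). i + j < n}) \<longlonglongrightarrow> (\<Sum>k. norm (a k)) * (\<Sum>k. norm (b k))"
    by (simp add: sums_def f_def sum.triangle_reindex)
  show ?thesis
    using tendsto_diff[OF square triangle] by (simp add: f_def[symmetric] sum_diff sub)
qed

lemma bounded_bilinear_Cauchy_product_sums:
  fixes a :: "nat \<Rightarrow> 'a::banach" and b :: "nat \<Rightarrow> 'b::banach" and p :: "'a \<Rightarrow> 'b \<Rightarrow> 'c::banach"
  assumes "bounded_bilinear p"
    and a: "summable (\<lambda>k. norm (a k))" and b: "summable (\<lambda>k. norm (b k))"
  shows "(\<lambda>k. \<Sum>i\<le>k. p (a i) (b (k - i))) sums p (\<Sum>k. a k) (\<Sum>k. b k)"
proof -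
  interpret bounded_bilinear p by fact
  obtain K where K: "\<And>x y. norm (p x y) \<le> norm x * norm y * K"
    using bounded by blast
  define S1 where "S1 n = {..<n} \<times> {..<n}" for n :: nat
  define S2 where "S2 n = {(i, j). i + j < n}" for n :: nat
  have S2_S1: "S2 n \<subseteq> S1 n" and fin: "finite (S1 n)" for n
    by (auto simp: S1_def S2_def)
  define g where "g = (\<lambda>(i, j). p (a i) (b j))"
  define f where "f = (\<lambda>(i, j). norm (a i) * norm (b j))"
  have "(\<lambda>n. p (\<Sum>k<n. a k) (\<Sum>k<n. b k)) \<longlonglongrightarrow> p (\<Sum>k. a k) (\<Sum>k. b k)"
    by (intro tendsto summable_LIMSEQ summable_norm_cancel[OF a] summable_norm_cancel[OF b])
  moreover have "p (\<Sum>k<n. a k) (\<Sum>k<n. b k) = sum g (S1 n)" for n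
    unfolding sum_left by (simp add: sum_right S1_def g_def sum.cartesian_product)
  ultimately have square: "(\<lambda>n. sum g (S1 n)) \<longlonglongrightarrow> p (\<Sum>k. a k) (\<Sum>k. b k)"
    by simp
  have small: "(\<lambda>n. sum f (S1 n - S2 n)) \<longlonglongrightarrow> 0"
    using Cauchy_product_square_minus_triangle[OF a b] by (simp add: f_def S1_def S2_def)
  have bound: "norm (sum g (S1 n) - sum g (S2 n)) \<le> norm (sum f (S1 n - S2 n)) * K" for n
  proof -
    have "0 \<le> sum f (S1 n - S2 n)"
      by (rule sum_nonneg) (auto simp: f_def)
    have "norm (sum g (S1 n) - sum g (S2 n)) = norm (sum g (S1 n - S2 n))"
      by (simp add: sum_diff fin S2_S1)
    also have "\<dots> \<le> (\<Sum>p\<in>S1 n - S2 n. f p * K)"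
      by (rule order_trans[OF norm_sum sum_mono]) (auto simp: f_def g_def K split: prod.split)
    also have "\<dots> = sum f (S1 n - S2 n) * K"
      by (rule sum_distrib_right[symmetric])
    also have "\<dots> = norm (sum f (S1 n - S2 n)) * K"
      using \<open>0 \<le> sum f (S1 n - S2 n)\<close> by simp
    finally show ?thesis .
  qed
  have "(\<lambda>n. sum g (S1 n) - sum g (S2 n)) \<longlonglongrightarrow> 0"
    by (rule tendsto_0_le[OF small always_eventually]) (rule allI, rule bound)
  from tendsto_diff[OF square this] have "(\<lambda>n. sum g (S2 n)) \<longlonglongrightarrow> p (\<Sum>k. a k) (\<Sum>k. b k)"
    by simp
  then show ?thesis
    by (simp add: sums_def S2_def g_def sum.triangle_reindex)
qed

section \<open>Operators and adjoints\<close>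

definition clinear :: "('a::complex_vector \<Rightarrow> 'b::complex_vector) \<Rightarrow> bool" where
  "clinear A \<longleftrightarrow> (\<forall>x y. A (x + y) = A x + A y) \<and> (\<forall>c x. A (c *\<^sub>C x) = c *\<^sub>C A x)"

lemma clinear_add: "clinear A \<Longrightarrow> A (x + y) = A x + A y"
  by (simp add: clinear_def)

lemma clinear_scaleC: "clinear A \<Longrightarrow> A (c *\<^sub>C x) = c *\<^sub>C A x"
  by (simp add: clinear_def)

lemma clinear_zero: "clinear A \<Longrightarrow> A 0 = 0"
  using clinear_add[of A 0 0] by simp

lemma clinear_minus: "clinear A \<Longrightarrow> A (- x) = - A x"
  using clinear_add[of A x "- x"] clinear_zero[of A] by (simp add: eq_neg_iff_add_eq_0 add.commute)

lemma clinear_diff: "clinear A \<Longrightarrow> A (x - y) = A x - A y"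
  using clinear_add[of A x "- y"] clinear_minus[of A y] by simp

lemma clinear_scaleR: "clinear A \<Longrightarrow> A (r *\<^sub>R x) = r *\<^sub>R A x"
  by (simp add: scaleR_scaleC clinear_scaleC)

lemma clinear_compose: "clinear A \<Longrightarrow> clinear B \<Longrightarrow> clinear (\<lambda>x. A (B x))"
  by (simp add: clinear_def)

lemma clinear_funpow: "clinear (A :: 'a::complex_vector \<Rightarrow> 'a) \<Longrightarrow> clinear (A ^^ n)"
  by (induction n) (auto simp: clinear_def)

lemma clinear_bounded_linear: "clinear A \<Longrightarrow> (\<And>x. norm (A x) \<le> K * norm x) \<Longrightarrow> bounded_linear A"
  by (rule bounded_linear_intro[where K = K]) (auto simp: clinear_add clinear_scaleR mult.commute)

lemma clinear_imp_linear: "clinear A \<Longrightarrow> Vector_Spaces.linear (*\<^sub>C) (*\<^sub>C) A"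
  by (simp add: Vector_Spaces.linear_iff clinear_def complex_vector.vector_space_axioms vector_space_pair.intro)

lemma subspace_range_clinear: "clinear A \<Longrightarrow> complex_vector.subspace (range A)"
  unfolding complex_vector.subspace_def
  by (metis (no_types, lifting) clinear_add clinear_scaleC clinear_zero rangeE range_eqI)

lemma clinear_inverse:
  assumes "clinear L" "\<And>x. L (N x) = x" "\<And>x. N (L x) = x"
  shows "clinear N"
  unfolding clinear_def
proof (intro conjI allI)
  fix x y c
  have "N (x + y) = N (L (N x) + L (N y))"
    using assms(2) by simp
  then show "N (x + y) = N x + N y"
    using assms(1,3) by (simp add: clinear_add[symmetric])
  have "N (c *\<^sub>C x) = N (c *\<^sub>C L (N x))"
    using assms(2) by simp
  then show "N (c *\<^sub>C x) = c *\<^sub>C N x"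
    using assms(1,3) by (simp add: clinear_scaleC[symmetric])
qed

lemma bop_on_UNIV_iff: "bop_on UNIV T \<longleftrightarrow> clinear T \<and> (\<exists>K. \<forall>x. norm (T x) \<le> K * norm x)"
  by (simp add: bop_on_def clinear_def)

lemma norm_funpow_le:
  fixes X :: "'a::real_normed_vector \<Rightarrow> 'a"
  assumes "\<And>v. norm (X v) \<le> norm v"
  shows "norm ((X ^^ n) v) \<le> norm v"
  by (induction n) (auto intro: order_trans[OF assms])

lemma adjoint_exists:
  fixes T :: "'a::chilbert \<Rightarrow> 'a"
  assumes "clinear T" "\<And>x. norm (T x) \<le> K * norm x"
  shows "\<exists>B. \<forall>x y. cinner (T x) y = cinner x (B y)"
proof -
  have "\<exists>v. \<forall>x. cinner (T x) y = cinner x v" for y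
  proof (rule riesz_representation[where K = "K * norm y"])
    show "cinner (T (x + z)) y = cinner (T x) y + cinner (T z) y" for x z
      by (simp add: assms(1) clinear_add cinner_add_left)
    show "cinner (T (c *\<^sub>C x)) y = c * cinner (T x) y" for c x
      by (simp add: assms(1) clinear_scaleC cinner_scaleC_left)
    show "cmod (cinner (T x) y) \<le> K * norm y * norm x" for x
      using cmod_cinner_le[of "T x" y] mult_right_mono[OF assms(2)[of x] norm_ge_zero[of y]]
      by (simp add: algebra_simps)
  qed
  then show ?thesis
    by metis
qed

lemma cinner_adjoint_on_UNIV:
  assumes "bop_on UNIV (T :: 'a::chilbert \<Rightarrow> 'a)"
  shows "cinner (T x) y = cinner x (adjoint_on UNIV T y)"
proof -
  obtain K where "clinear T" "\<And>x. norm (T x) \<le> K * norm x"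
    using assms bop_on_UNIV_iff by metis
  then obtain B where "\<forall>x y. cinner (T x) y = cinner x (B y)"
    using adjoint_exists by metis
  then have "\<exists>B. (\<forall>y\<in>UNIV. B y \<in> UNIV) \<and> (\<forall>x\<in>UNIV. \<forall>y\<in>UNIV. cinner (T x) y = cinner x (B y))"
    by blast
  from someI_ex[OF this] show ?thesis
    unfolding adjoint_on_def by blast
qed

lemma adjoint_on_eqI:
  fixes A :: "'a::chilbert \<Rightarrow> 'a"
  assumes M: "complex_vector.subspace M" and B: "\<And>y. y \<in> M \<Longrightarrow> B y \<in> M"
    and adj: "\<And>x y. x \<in> M \<Longrightarrow> y \<in> M \<Longrightarrow> cinner (A x) y = cinner x (B y)" and "y \<in> M"
  shows "adjoint_on M A y = B y"
proof -
  have "\<exists>B. (\<forall>y\<in>M. B y \<in> M) \<and> (\<forall>x\<in>M. \<forall>y\<in>M. cinner (A x) y = cinner x (B y))"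
    using B adj by blast
  then have A': "(\<forall>y\<in>M. adjoint_on M A y \<in> M)
      \<and> (\<forall>x\<in>M. \<forall>y\<in>M. cinner (A x) y = cinner x (adjoint_on M A y))"
    unfolding adjoint_on_def by (rule someI_ex)
  define d where "d = adjoint_on M A y - B y"
  have "d \<in> M"
    using A' \<open>y \<in> M\<close> B M by (simp add: d_def complex_vector.subspace_diff)
  then have "cinner d d = 0"
    using A' \<open>y \<in> M\<close> adj by (simp add: d_def cinner_diff_right)
  then show ?thesis
    by (simp add: d_def cinner_eq_zero_iff)
qed

lemma clinear_adjoint: "(\<And>x y. cinner (A x) y = cinner x (B y)) \<Longrightarrow> clinear B"
  unfolding clinear_def by (metis cinner_add_right cinner_eq_right cinner_scaleC_right)

lemma norm_adjoint_le:
  fixes A B :: "'a::complex_inner \<Rightarrow> 'a"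
  assumes adj: "\<And>x y. cinner (A x) y = cinner x (B y)" and bound: "\<And>x. norm (A x) \<le> K * norm x"
  shows "norm (B y) \<le> K * norm y"
proof (cases "B y = 0")
  case True
  have "0 \<le> K * norm y"
    using order_trans[OF norm_ge_zero bound] .
  then show ?thesis
    using True by simp
next
  case False
  have "(norm (B y))\<^sup>2 = Re (cinner (A (B y)) y)"
    by (simp add: adj Re_cinner_self_norm)
  also have "\<dots> \<le> norm (A (B y)) * norm y"
    using complex_Re_le_cmod cmod_cinner_le order_trans by blast
  also have "\<dots> \<le> K * norm (B y) * norm y"
    using bound[of "B y"] by (simp add: mult_right_mono)
  finally have "norm (B y) * norm (B y) \<le> norm (B y) * (K * norm y)"
    by (simp add: power2_eq_square algebra_simps)
  then show ?thesis
    using False by simp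
qed

definition hermitian :: "('a::complex_inner \<Rightarrow> 'a) \<Rightarrow> bool" where
  "hermitian A \<longleftrightarrow> (\<forall>x y. cinner (A x) y = cinner x (A y))"

lemma hermitianI_Im_cinner:
  fixes A :: "'a::complex_inner \<Rightarrow> 'a"
  assumes lin: "clinear A" and real: "\<And>x. Im (cinner (A x) x) = 0"
  shows "hermitian A"
  unfolding hermitian_def
proof (intro allI)
  fix x y
  define a where "a = cinner (A x) y"
  define b where "b = cinner (A y) x"
  have "cinner (A (x + y)) (x + y) = cinner (A x) x + cinner (A y) y + a + b"
    by (simp add: a_def b_def lin clinear_add cinner_add_left cinner_add_right)
  then have "Im a + Im b = 0"
    using real[of "x + y"] real[of x] real[of y] by simp
  moreover have "cinner (A (x + \<i> *\<^sub>C y)) (x + \<i> *\<^sub>C y) = cinner (A x) x + cinner (A y) y - \<i> * a + \<i> * b"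
    by (simp add: a_def b_def lin clinear_add clinear_scaleC cinner_add_left cinner_add_right
        cinner_scaleC_left cinner_scaleC_right algebra_simps)
  then have "Re b - Re a = 0"
    using real[of "x + \<i> *\<^sub>C y"] real[of x] real[of y] by simp
  ultimately have "a = cnj b"
    by (simp add: complex_eq_iff)
  then show "cinner (A x) y = cinner x (A y)"
    by (simp add: a_def b_def cnj_cinner)
qed

lemma hermitian_funpow: "hermitian X \<Longrightarrow> hermitian (X ^^ n)"
proof (induction n)
  case (Suc n)
  have "cinner ((X ^^ Suc n) x) y = cinner x ((X ^^ Suc n) y)" for x y
  proof -
    have "cinner ((X ^^ Suc n) x) y = cinner ((X ^^ n) x) (X y)"
      using Suc.prems by (simp add: hermitian_def)
    also have "\<dots> = cinner x ((X ^^ n) (X y))"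
      using Suc by (simp add: hermitian_def)
    finally show ?thesis
      by (simp add: funpow_Suc_right del: funpow.simps)
  qed
  then show ?case
    by (simp add: hermitian_def)
qed (simp add: hermitian_def)

section \<open>The square root of \<open>1 - X\<close> for a hermitian contraction \<open>X\<close>\<close>

locale hermitian_contraction =
  fixes X :: "'a::chilbert \<Rightarrow> 'a"
  assumes clinear: "clinear X"
    and contraction: "\<And>v. norm (X v) \<le> norm v"
    and hermitian: "hermitian X"
begin

lemma bounded_linear_funpow: "bounded_linear (X ^^ n)"
  by (rule clinear_bounded_linear[OF clinear_funpow[OF clinear], where K = 1])
    (simp add: norm_funpow_le[OF contraction])

definition sqrt_term :: "nat \<Rightarrow> 'a \<Rightarrow>\<^sub>L 'a" where
  "sqrt_term n = Blinfun (\<lambda>v. sqrt_coeff n *\<^sub>R (X ^^ n) v)"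

lemma sqrt_term_apply: "blinfun_apply (sqrt_term n) v = sqrt_coeff n *\<^sub>R (X ^^ n) v"
  unfolding sqrt_term_def
  using bounded_linear_scaleR_right[THEN bounded_linear_compose, OF bounded_linear_funpow]
  by (simp add: bounded_linear_Blinfun_apply)

lemma norm_sqrt_term_le: "norm (sqrt_term n) \<le> \<bar>sqrt_coeff n\<bar>"
  by (rule norm_blinfun_bound) (auto simp: sqrt_term_apply norm_funpow_le[OF contraction] mult_left_mono)

lemma summable_norm_sqrt_term: "summable (\<lambda>n. norm (sqrt_term n))"
  by (rule summable_comparison_test[OF _ summable_abs_sqrt_coeff]) (auto simp: norm_sqrt_term_le)

definition sqrt_one_minus :: "'a \<Rightarrow> 'a" where
  "sqrt_one_minus = blinfun_apply (\<Sum>n. sqrt_term n)"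

lemma sqrt_one_minus_sums: "(\<lambda>n. sqrt_coeff n *\<^sub>R (X ^^ n) v) sums sqrt_one_minus v"
proof -
  have "sqrt_term sums (\<Sum>n. sqrt_term n)"
    by (rule summable_sums[OF summable_norm_cancel[OF summable_norm_sqrt_term]])
  from bounded_linear.sums[OF bounded_bilinear.bounded_linear_left[OF bounded_bilinear_blinfun_apply] this]
  show ?thesis
    by (simp add: sqrt_one_minus_def sqrt_term_apply)
qed

lemma clinear_sqrt_one_minus: "clinear sqrt_one_minus"
  unfolding clinear_def
proof (intro conjI allI)
  show "sqrt_one_minus (x + y) = sqrt_one_minus x + sqrt_one_minus y" for x y
    by (simp add: sqrt_one_minus_def blinfun.add_right)
  show "sqrt_one_minus (c *\<^sub>C x) = c *\<^sub>C sqrt_one_minus x" for c x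
  proof -
    have "(\<lambda>n. c *\<^sub>C (sqrt_coeff n *\<^sub>R (X ^^ n) x)) sums (c *\<^sub>C sqrt_one_minus x)"
      by (rule bounded_linear.sums[OF bounded_linear_scaleC_right sqrt_one_minus_sums])
    moreover have "c *\<^sub>C (sqrt_coeff n *\<^sub>R (X ^^ n) x) = sqrt_coeff n *\<^sub>R (X ^^ n) (c *\<^sub>C x)" for n
      by (simp add: clinear_scaleC[OF clinear_funpow[OF clinear]] scaleR_scaleC scaleC_scaleC mult.commute)
    ultimately show ?thesis
      using sqrt_one_minus_sums[of "c *\<^sub>C x"] by (simp add: sums_unique2)
  qed
qed

lemma bop_on_sqrt_one_minus: "bop_on UNIV sqrt_one_minus"
  unfolding bop_on_UNIV_iff sqrt_one_minus_def
  using clinear_sqrt_one_minus norm_blinfun by (auto simp: sqrt_one_minus_def)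

lemma sqrt_one_minus_square: "sqrt_one_minus (sqrt_one_minus x) = x - X x"
proof -
  define b where "b j = sqrt_coeff j *\<^sub>R (X ^^ j) x" for j
  have "summable (\<lambda>j. norm (b j))"
    by (rule summable_comparison_test[OF _ summable_mult2[OF summable_abs_sqrt_coeff, of "norm x"]])
      (auto simp: b_def norm_funpow_le[OF contraction] mult_left_mono)
  with summable_norm_sqrt_term
  have "(\<lambda>k. \<Sum>i\<le>k. blinfun_apply (sqrt_term i) (b (k - i))) sums sqrt_one_minus (\<Sum>k. b k)"
    unfolding sqrt_one_minus_def by (rule bounded_bilinear_Cauchy_product_sums[OF bounded_bilinear_blinfun_apply])
  moreover have "(\<Sum>k. b k) = sqrt_one_minus x"
    using sqrt_one_minus_sums by (simp add: b_def sums_iff)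
  moreover have "(\<Sum>i\<le>k. blinfun_apply (sqrt_term i) (b (k - i)))
      = (if k = 0 then x else 0) + (if k = 1 then - X x else 0)" for k
  proof -
    have "blinfun_apply (sqrt_term i) (b (k - i)) = (sqrt_coeff i * sqrt_coeff (k - i)) *\<^sub>R (X ^^ k) x"
      if "i \<le> k" for i
    proof -
      have "(X ^^ i) ((X ^^ (k - i)) x) = (X ^^ (i + (k - i))) x"
        by (simp add: funpow_add)
      then show ?thesis
        using that by (simp add: sqrt_term_apply b_def clinear_scaleR[OF clinear_funpow[OF clinear]])
    qed
    then have "(\<Sum>i\<le>k. blinfun_apply (sqrt_term i) (b (k - i)))
        = (\<Sum>i\<le>k. sqrt_coeff i * sqrt_coeff (k - i)) *\<^sub>R (X ^^ k) x"
      by (simp add: scaleR_sum_left)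
    then show ?thesis
      by (simp add: sqrt_coeff_convolution)
  qed
  ultimately have "(\<lambda>k. (if k = 0 then x else 0) + (if k = 1 then - X x else 0))
      sums sqrt_one_minus (sqrt_one_minus x)"
    by simp
  moreover have "(\<lambda>k. (if k = 0 then x else 0) + (if k = 1 then - X x else 0)) sums (x + - X x)"
    by (rule sums_add) (use sums_single[of 0 "\<lambda>_. x"] sums_single[of 1 "\<lambda>_. - X x"] in auto)
  ultimately show ?thesis
    using sums_unique2 by fastforce
qed

lemma sqrt_one_minus_nonneg:
  "Im (cinner (sqrt_one_minus x) x) = 0 \<and> 0 \<le> Re (cinner (sqrt_one_minus x) x)"
proof -
  define c where "c n = cinner ((X ^^ n) x) x" for n
  have "c n = cnj (c n)" for n
    using hermitian_funpow[OF hermitian, of n] by (simp add: c_def hermitian_def cnj_cinner)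
  then have c_real: "Im (c n) = 0" for n
    by (metis cnj.simps(2) neg_equal_zero)
  have sums: "(\<lambda>n. complex_of_real (sqrt_coeff n) * c n) sums cinner (sqrt_one_minus x) x"
    using bounded_linear.sums[OF bounded_linear_cinner_left sqrt_one_minus_sums]
    by (simp add: c_def cinner_scaleR_left)
  from sums_Im[OF sums] have "(\<lambda>n. 0) sums Im (cinner (sqrt_one_minus x) x)"
    by (simp add: c_real)
  then have "Im (cinner (sqrt_one_minus x) x) = 0"
    using sums_unique2[OF _ sums_zero] by blast
  have "sqrt_coeff n * (norm x)\<^sup>2 \<le> sqrt_coeff n * Re (c n)" for n
  proof (cases "n = 0")
    case False
    have "Re (c n) \<le> norm ((X ^^ n) x) * norm x"
      unfolding c_def using complex_Re_le_cmod cmod_cinner_le order_trans by blast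
    also have "\<dots> \<le> (norm x)\<^sup>2"
      using norm_funpow_le[OF contraction] by (simp add: power2_eq_square mult_right_mono)
    finally show ?thesis
      using sqrt_coeff_nonpos[of n] False by (simp add: mult_left_mono_neg)
  qed (simp add: c_def Re_cinner_self_norm)
  moreover have "(\<lambda>n. sqrt_coeff n * (norm x)\<^sup>2) sums (suminf sqrt_coeff * (norm x)\<^sup>2)"
    using summable_sqrt_coeff by (intro sums_mult2 summable_sums)
  moreover have "(\<lambda>n. sqrt_coeff n * Re (c n)) sums Re (cinner (sqrt_one_minus x) x)"
    using sums_Re[OF sums] by (simp add: c_real)
  ultimately have "suminf sqrt_coeff * (norm x)\<^sup>2 \<le> Re (cinner (sqrt_one_minus x) x)"
    by (rule sums_le)
  moreover have "0 \<le> suminf sqrt_coeff * (norm x)\<^sup>2"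
    using suminf_sqrt_coeff_nonneg by simp
  ultimately show ?thesis
    using \<open>Im (cinner (sqrt_one_minus x) x) = 0\<close> by simp
qed

lemma sqrt_on_one_minus:
  defines "S \<equiv> sqrt_on UNIV (\<lambda>x. x - X x)"
  shows "bop_on UNIV S \<and> (\<forall>x\<in>UNIV. Im (cinner (S x) x) = 0 \<and> 0 \<le> Re (cinner (S x) x))
    \<and> (\<forall>x\<in>UNIV. S (S x) = x - X x)"
proof -
  have "\<exists>S. bop_on UNIV S \<and> (\<forall>x\<in>UNIV. Im (cinner (S x) x) = 0 \<and> 0 \<le> Re (cinner (S x) x))
      \<and> (\<forall>x\<in>UNIV. S (S x) = x - X x)"
    using bop_on_sqrt_one_minus sqrt_one_minus_nonneg sqrt_one_minus_square by blast
  then show ?thesis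
    unfolding S_def sqrt_on_def by (rule someI_ex)
qed

end

section \<open>Resolvents\<close>

lemma neumann_series:
  fixes A :: "'a::chilbert \<Rightarrow> 'a"
  assumes A: "clinear A" "\<And>v. norm (A v) \<le> norm v" and w: "cmod w < 1"
  defines "N \<equiv> \<lambda>x. \<Sum>n. w ^ n *\<^sub>C (A ^^ n) x"
  shows "N x - w *\<^sub>C A (N x) = x" and "N (x - w *\<^sub>C A x) = x"
proof -
  define f where "f x = (\<lambda>n. w ^ n *\<^sub>C (A ^^ n) x)" for x
  have summable: "summable (f x)" for x
  proof (rule summable_comparison_test[OF _ summable_mult2[OF summable_geometric[of "cmod w"], of "norm x"]])
    show "\<exists>N. \<forall>n\<ge>N. norm (f x n) \<le> cmod w ^ n * norm x"
      by (auto simp: f_def norm_scaleC norm_power norm_funpow_le[OF A(2)] mult_left_mono)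
  qed (use w in simp)
  have N_f: "N x = suminf (f x)" for x
    by (simp add: N_def f_def)
  have shift: "w *\<^sub>C A (f x n) = f x (Suc n)" for x n
    by (simp add: f_def clinear_scaleC[OF A(1)] scaleC_scaleC)
  have "bounded_linear A"
    by (rule clinear_bounded_linear[OF A(1), where K = 1]) (simp add: A(2))
  have "w *\<^sub>C A (N x) = (\<Sum>n. w *\<^sub>C A (f x n))"
    unfolding N_f
    by (rule bounded_linear.suminf[OF bounded_linear_compose[OF bounded_linear_scaleC_right \<open>bounded_linear A\<close>] summable])
  also have "\<dots> = N x - f x 0"
    unfolding shift N_f by (rule suminf_split_head[OF summable])
  finally show "N x - w *\<^sub>C A (N x) = x"
    by (simp add: f_def)
  have "f (x - w *\<^sub>C A x) = (\<lambda>n. f x n - f x (Suc n))"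
    by (simp add: fun_eq_iff f_def clinear_diff[OF clinear_funpow[OF A(1)]] clinear_scaleC[OF clinear_funpow[OF A(1)]]
        funpow_Suc_right complex_vector.scale_right_diff_distrib scaleC_scaleC del: funpow.simps)
  then have "N (x - w *\<^sub>C A x) = (\<Sum>n. f x n - f x (Suc n))"
    by (simp add: N_f)
  also have "\<dots> = N x - (\<Sum>n. f x (Suc n))"
    unfolding N_f by (rule suminf_diff[OF summable summable_Suc_iff[THEN iffD2, OF summable], symmetric])
  also have "\<dots> = f x 0"
    unfolding N_f using suminf_split_head[OF summable] by simp
  finally show "N (x - w *\<^sub>C A x) = x"
    by (simp add: f_def)
qed

lemma inv_on_eqI:
  assumes B: "\<And>x. x \<in> M \<Longrightarrow> B x \<in> M \<and> L (B x) = x \<and> B (L x) = x" and "x \<in> M"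
  shows "inv_on M L x = B x"
proof -
  have "\<exists>B. \<forall>x\<in>M. B x \<in> M \<and> L (B x) = x \<and> B (L x) = x"
    using B by blast
  then have inv: "\<forall>x\<in>M. inv_on M L x \<in> M \<and> L (inv_on M L x) = x \<and> inv_on M L (L x) = x"
    unfolding inv_on_def by (rule someI_ex)
  have "inv_on M L x = inv_on M L (L (B x))"
    using B \<open>x \<in> M\<close> by simp
  also have "\<dots> = B x"
    using inv B \<open>x \<in> M\<close> by blast
  finally show ?thesis .
qed

lemma inv_on_resolvent:
  fixes A :: "'a::chilbert \<Rightarrow> 'a"
  assumes "clinear A" "\<And>v. norm (A v) \<le> norm v" "cmod w < 1"
  defines "L \<equiv> \<lambda>y. y - w *\<^sub>C A y"
  shows "L (inv_on UNIV L x) = x" and "inv_on UNIV L (L x) = x" and "clinear (inv_on UNIV L)"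
proof -
  define N where "N x = (\<Sum>n. w ^ n *\<^sub>C (A ^^ n) x)" for x
  have LN: "L (N x) = x" and NL: "N (L x) = x" for x
    using neumann_series[OF assms(1-3), of x] by (simp_all add: L_def N_def)
  have inv: "inv_on UNIV L x = N x" for x
    by (rule inv_on_eqI) (simp_all add: LN NL)
  have "clinear L"
    unfolding clinear_def L_def
  proof (intro conjI allI)
    show "x + y - w *\<^sub>C A (x + y) = (x - w *\<^sub>C A x) + (y - w *\<^sub>C A y)" for x y
      by (simp add: clinear_add[OF assms(1)] scaleC_add_right)
    show "c *\<^sub>C x - w *\<^sub>C A (c *\<^sub>C x) = c *\<^sub>C (x - w *\<^sub>C A x)" for c x
      by (simp add: clinear_scaleC[OF assms(1)] scaleC_scaleC complex_vector.scale_right_diff_distrib mult.commute)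
  qed
  then have "clinear N"
    using LN NL by (rule clinear_inverse)
  moreover have "inv_on UNIV L = N"
    using inv by (rule ext)
  ultimately show "L (inv_on UNIV L x) = x" "inv_on UNIV L (L x) = x" "clinear (inv_on UNIV L)"
    using LN NL by simp_all
qed

section \<open>Orthonormal systems and traces\<close>

definition orth_proj :: "'a::complex_inner set \<Rightarrow> 'a \<Rightarrow> 'a" where
  "orth_proj E x = (\<Sum>e\<in>E. cinner x e *\<^sub>C e)"

lemma sum_cinner_corthonormal:
  assumes "finite E" "corthonormal E" "f \<in> E"
  shows "(\<Sum>e\<in>E. a e * cinner e f) = a f"
proof -
  have "(\<Sum>e\<in>E. a e * cinner e f) = (\<Sum>e\<in>E. if e = f then a f else 0)"
    using assms(2,3) by (intro sum.cong) (auto simp: corthonormal_def)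
  also have "\<dots> = a f"
    using assms(1,3) by simp
  finally show ?thesis .
qed

lemma cinner_orth_proj_residual:
  "finite E \<Longrightarrow> corthonormal E \<Longrightarrow> f \<in> E \<Longrightarrow> cinner (x - orth_proj E x) f = 0"
  by (simp add: orth_proj_def cinner_diff_left cinner_sum_left cinner_scaleC_left sum_cinner_corthonormal)

lemma orth_proj_in_span: "orth_proj E x \<in> cspan E"
  unfolding orth_proj_def by (intro complex_vector.span_sum complex_vector.span_scale complex_vector.span_base)

lemma orth_proj_span:
  assumes "finite E" "corthonormal E" "v \<in> cspan E"
  shows "orth_proj E v = v"
proof -
  obtain u where u: "v = (\<Sum>e\<in>E. u e *\<^sub>C e)"
    using assms(3) complex_vector.span_finite[OF assms(1)] by auto
  have "cinner v f = u f" if "f \<in> E" for f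
    unfolding u by (simp add: cinner_sum_left cinner_scaleC_left sum_cinner_corthonormal assms that)
  then show ?thesis
    unfolding orth_proj_def u[symmetric] by (simp add: u)
qed

lemma cinner_span_eq_0:
  assumes "finite E" "corthonormal E" "\<And>f. f \<in> E \<Longrightarrow> cinner h f = 0" "v \<in> cspan E"
  shows "cinner h v = 0"
proof -
  have "cinner h v = cinner h (orth_proj E v)"
    using orth_proj_span[OF assms(1,2,4)] by simp
  also have "\<dots> = 0"
    by (simp add: orth_proj_def cinner_sum_right cinner_scaleC_right assms(3))
  finally show ?thesis .
qed

lemma cspan_insert_exchange:
  fixes x e :: "'a::complex_vector"
  assumes "x - c *\<^sub>C e \<in> cspan S" "c \<noteq> 0"
  shows "cspan (insert e S) = cspan (insert x S)"
proof -
  have S: "cspan S \<subseteq> cspan (insert y S)" for y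
    by (rule complex_vector.span_mono) blast
  have "x = c *\<^sub>C e + (x - c *\<^sub>C e)" and "e = inverse c *\<^sub>C (x - (x - c *\<^sub>C e))"
    using \<open>c \<noteq> 0\<close> by simp_all
  then have "x \<in> cspan (insert e S)" "e \<in> cspan (insert x S)"
    using assms(1) S
    by (metis complex_vector.span_add complex_vector.span_base complex_vector.span_scale insertI1 subsetD,
        metis complex_vector.span_diff complex_vector.span_base complex_vector.span_scale insertI1 subsetD)
  then show ?thesis
    using S by (auto simp: complex_vector.span_eq intro: complex_vector.span_base)
qed

lemma gram_schmidt:
  fixes S :: "'a::chilbert set"
  assumes "finite S"
  shows "\<exists>E. finite E \<and> corthonormal E \<and> cspan E = cspan S"
  using assms
proof (induction S rule: finite_induct)
  case empty
  then show ?case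
    by (intro exI[of _ "{}"]) (simp add: corthonormal_def)
next
  case (insert x S)
  then obtain E where E: "finite E" "corthonormal E" "cspan E = cspan S"
    by blast
  define y where "y = x - orth_proj E x"
  have span_insert_E: "cspan (insert z E) = cspan (insert z S)" for z
    by (simp add: complex_vector.span_insert E(3))
  show ?case
  proof (cases "y = 0")
    case True
    then have "x \<in> cspan S"
      using orth_proj_in_span[of E x] E(3) by (simp add: y_def)
    then show ?thesis
      using E complex_vector.span_redundant by blast
  next
    case False
    define e where "e = complex_of_real (1 / norm y) *\<^sub>C y"
    have "norm e = 1"
      using False by (simp add: e_def norm_scaleC norm_divide)
    then have "cinner e e = 1"
      by (simp add: cinner_self_norm)
    moreover have "cinner e f = 0" "cinner f e = 0" if "f \<in> E" for f
      using cinner_orth_proj_residual[OF E(1,2) that, of x] cnj_cinner[of f e]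
      by (simp_all add: e_def y_def cinner_scaleC_left)
    ultimately have "corthonormal (insert e E)"
      using E(2) unfolding corthonormal_def by auto
    moreover have "x - complex_of_real (norm y) *\<^sub>C e \<in> cspan S"
      using False orth_proj_in_span[of E x] E(3) by (simp add: e_def y_def scaleC_scaleC)
    then have "cspan (insert e E) = cspan (insert x S)"
      using False by (simp add: span_insert_E cspan_insert_exchange)
    ultimately show ?thesis
      using E(1) by (intro exI[of _ "insert e E"]) simp
  qed
qed

lemma finite_dim_basis:
  assumes "finite B0" "X \<subseteq> cspan B0"
  obtains B where "finite B" "B \<subseteq> X" "complex_vector.independent B" "X \<subseteq> cspan B" "card B = cdim X"
proof -
  obtain B where B: "B \<subseteq> X" "complex_vector.independent B" "X \<subseteq> cspan B" "card B = cdim X"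
    by (rule complex_vector.basis_exists[of X])
  moreover have "finite B"
    using complex_vector.independent_span_bound[OF assms(1) B(2)] B(1) assms(2) by blast
  ultimately show ?thesis
    using that by blast
qed

lemma finite_dim_subspace_orthonormal_basis:
  fixes V :: "'a::chilbert set"
  assumes "complex_vector.subspace V" "finite B0" "V \<subseteq> cspan B0"
  shows "\<exists>E. finite E \<and> E \<subseteq> V \<and> corthonormal E \<and> V \<subseteq> cspan E"
proof -
  obtain B where B: "finite B" "B \<subseteq> V" "complex_vector.independent B" "V \<subseteq> cspan B" "card B = cdim V"
    by (rule finite_dim_basis[OF assms(2,3)])
  then obtain E where E: "finite E" "corthonormal E" "cspan E = cspan B"
    using gram_schmidt by blast
  have "cspan B \<subseteq> V"
    using B(2) assms(1) by (rule complex_vector.span_minimal)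
  then have "E \<subseteq> V"
    using E(3) complex_vector.span_superset[of E] by blast
  then show ?thesis
    using E B(4) by blast
qed

definition clinear_on :: "'a::complex_vector set \<Rightarrow> ('a \<Rightarrow> 'a) \<Rightarrow> bool" where
  "clinear_on M A \<longleftrightarrow> (\<forall>x\<in>M. \<forall>y\<in>M. A (x + y) = A x + A y) \<and> (\<forall>c. \<forall>x\<in>M. A (c *\<^sub>C x) = c *\<^sub>C A x)"

definition hermitian_on :: "'a::complex_inner set \<Rightarrow> ('a \<Rightarrow> 'a) \<Rightarrow> bool" where
  "hermitian_on M A \<longleftrightarrow> (\<forall>x\<in>M. \<forall>y\<in>M. cinner (A x) y = cinner x (A y))"

lemma clinear_on_add: "clinear_on M A \<Longrightarrow> x \<in> M \<Longrightarrow> y \<in> M \<Longrightarrow> A (x + y) = A x + A y"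
  by (simp add: clinear_on_def)

lemma hermitian_onD: "hermitian_on M A \<Longrightarrow> x \<in> M \<Longrightarrow> y \<in> M \<Longrightarrow> cinner (A x) y = cinner x (A y)"
  by (simp add: hermitian_on_def)

lemma clinear_on_sum:
  assumes M: "complex_vector.subspace M" and A: "clinear_on M A" and "finite E" "E \<subseteq> M"
  shows "A (\<Sum>e\<in>E. c e *\<^sub>C e) = (\<Sum>e\<in>E. c e *\<^sub>C A e)"
  using \<open>finite E\<close> \<open>E \<subseteq> M\<close>
proof (induction E rule: finite_induct)
  case empty
  have "A (0 + 0) = A 0 + A 0"
    using A complex_vector.subspace_0[OF M] unfolding clinear_on_def by blast
  then show ?case
    by simp
next
  case (insert x F)
  have "(\<Sum>e\<in>F. c e *\<^sub>C e) \<in> M" "c x *\<^sub>C x \<in> M"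
    using insert M by (auto intro!: complex_vector.subspace_sum complex_vector.subspace_scale)
  then show ?case
    using insert A by (simp add: clinear_on_def)
qed

text \<open>A hermitian operator vanishes on the orthogonal complement of its range.\<close>

lemma hermitian_on_expansion:
  fixes A :: "'a::chilbert \<Rightarrow> 'a"
  assumes M: "complex_vector.subspace M" and maps: "\<And>x. x \<in> M \<Longrightarrow> A x \<in> M"
    and lin: "clinear_on M A" and herm: "hermitian_on M A"
    and E: "finite E" "E \<subseteq> M" "corthonormal E" "A ` M \<subseteq> cspan E" and "f \<in> M"
  shows "A f = (\<Sum>e\<in>E. cinner f e *\<^sub>C A e)"
proof -
  define p where "p = orth_proj E f"
  have "cspan E \<subseteq> M"
    using E(2) M by (rule complex_vector.span_minimal)
  then have "p \<in> M"
    using orth_proj_in_span[of E f] by (auto simp: p_def)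
  then have r: "f - p \<in> M"
    using \<open>f \<in> M\<close> M by (simp add: complex_vector.subspace_diff)
  have "cinner (f - p) g = 0" if "g \<in> E" for g
    using cinner_orth_proj_residual[OF E(1,3) that] by (simp add: p_def)
  moreover have "A (A (f - p)) \<in> cspan E"
    using E(4) by (rule subsetD) (rule imageI[OF maps[OF r]])
  ultimately have "cinner (f - p) (A (A (f - p))) = 0"
    by (rule cinner_span_eq_0[OF E(1,3)])
  moreover have "cinner (A (f - p)) (A (f - p)) = cinner (f - p) (A (A (f - p)))"
    by (rule hermitian_onD[OF herm r maps[OF r]])
  ultimately have "A (f - p) = 0"
    by (simp add: cinner_eq_zero_iff)
  have "A ((f - p) + p) = A (f - p) + A p"
    by (rule clinear_on_add[OF lin r \<open>p \<in> M\<close>])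
  also have "A p = (\<Sum>e\<in>E. cinner f e *\<^sub>C A e)"
    unfolding p_def orth_proj_def by (rule clinear_on_sum[OF M lin E(1,2)])
  finally show ?thesis
    using \<open>A (f - p) = 0\<close> by simp
qed

lemma trace_sum_independent:
  fixes A :: "'a::chilbert \<Rightarrow> 'a"
  assumes M: "complex_vector.subspace M" and maps: "\<And>x. x \<in> M \<Longrightarrow> A x \<in> M"
    and lin: "clinear_on M A" and herm: "hermitian_on M A"
    and E1: "finite E1" "E1 \<subseteq> M" "corthonormal E1" "A ` M \<subseteq> cspan E1"
    and E2: "finite E2" "E2 \<subseteq> M" "corthonormal E2" "A ` M \<subseteq> cspan E2"
  shows "(\<Sum>e\<in>E1. cinner (A e) e) = (\<Sum>f\<in>E2. cinner (A f) f)"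
proof -
  have key: "A f = (\<Sum>e\<in>E1. cinner f e *\<^sub>C A e)" if "f \<in> M" for f
    using hermitian_on_expansion[OF M maps lin herm E1 that] .
  have "(\<Sum>f\<in>E2. cinner (A f) f) = (\<Sum>f\<in>E2. \<Sum>e\<in>E1. cinner f e * cinner (A e) f)"
    using E2(2) by (intro sum.cong) (auto simp: key cinner_sum_left cinner_scaleC_left)
  also have "\<dots> = (\<Sum>e\<in>E1. \<Sum>f\<in>E2. cinner f e * cinner (A e) f)"
    by (rule sum.swap)
  also have "\<dots> = (\<Sum>e\<in>E1. cinner (A e) (orth_proj E2 e))"
    by (intro sum.cong) (auto simp: orth_proj_def cinner_sum_right cinner_scaleC_right cnj_cinner mult.commute)
  also have "\<dots> = (\<Sum>e\<in>E1. cinner (A e) e)"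
  proof (intro sum.cong refl)
    fix e
    assume "e \<in> E1"
    then have "e \<in> M"
      using E1(2) by blast
    have "cinner (e - orth_proj E2 e) g = 0" if "g \<in> E2" for g
      using cinner_orth_proj_residual[OF E2(1,3) that] .
    moreover have "A e \<in> cspan E2"
      using E2(4) by (rule subsetD) (rule imageI[OF \<open>e \<in> M\<close>])
    ultimately have "cinner (e - orth_proj E2 e) (A e) = 0"
      by (rule cinner_span_eq_0[OF E2(1,3)])
    then have "cinner (A e) (e - orth_proj E2 e) = 0"
      using cnj_cinner[of "e - orth_proj E2 e" "A e"] by simp
    then show "cinner (A e) (orth_proj E2 e) = cinner (A e) e"
      by (simp add: cinner_diff_right)
  qed
  finally show ?thesis
    by simp
qed

lemma trace_on_eq:
  fixes A :: "'a::chilbert \<Rightarrow> 'a"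
  assumes M: "complex_vector.subspace M" and maps: "\<And>x. x \<in> M \<Longrightarrow> A x \<in> M"
    and lin: "clinear_on M A" and herm: "hermitian_on M A"
    and E: "finite E" "E \<subseteq> M" "corthonormal E" "A ` M \<subseteq> cspan E"
  shows "trace_on M A = (\<Sum>e\<in>E. cinner (A e) e)"
proof -
  have "\<exists>B. finite B \<and> B \<subseteq> M \<and> corthonormal B \<and> A ` M \<subseteq> cspan B"
    using E by blast
  then have "let B = SOME B. finite B \<and> B \<subseteq> M \<and> corthonormal B \<and> A ` M \<subseteq> cspan B
      in finite B \<and> B \<subseteq> M \<and> corthonormal B \<and> A ` M \<subseteq> cspan B"
    unfolding Let_def by (rule someI_ex)
  then show ?thesis
    unfolding trace_on_def Let_def
    by (intro trace_sum_independent[OF M maps lin herm _ _ _ _ E]) auto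
qed

lemma subspace_UNIV_Times: "complex_vector.subspace V \<Longrightarrow> complex_vector.subspace (UNIV \<times> V)"
  by (auto simp: complex_vector.subspace_def zero_prod_def scaleC_prod_def)

lemma Pair_zero_in_cspan:
  assumes "finite E" "v \<in> cspan E"
  shows "(0, v) \<in> cspan ((\<lambda>e. (0::'b::complex_vector, e)) ` E)"
proof -
  obtain u where "v = (\<Sum>e\<in>E. u e *\<^sub>C e)"
    using complex_vector.span_finite[OF assms(1)] assms(2) by auto
  then have "(0, v) = (\<Sum>e\<in>E. u e *\<^sub>C (0::'b, e))"
    by (simp add: prod_eq_iff fst_sum snd_sum scaleC_Pair)
  moreover have "(\<Sum>e\<in>E. u e *\<^sub>C (0::'b, e)) \<in> cspan ((\<lambda>e. (0, e)) ` E)"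
    by (intro complex_vector.span_sum complex_vector.span_scale complex_vector.span_base imageI)
  ultimately show ?thesis
    by simp
qed

lemma trace_on_Pair_zero:
  fixes B :: "'a::chilbert \<Rightarrow> 'a" and F :: "'b::chilbert \<times> 'a \<Rightarrow> 'b \<times> 'a"
  assumes V: "complex_vector.subspace V" and maps: "\<And>v. v \<in> V \<Longrightarrow> B v \<in> V"
    and lin: "clinear_on V B" and herm: "hermitian_on V B"
    and E: "finite E" "E \<subseteq> V" "corthonormal E" "V \<subseteq> cspan E"
    and F: "\<And>u v. v \<in> V \<Longrightarrow> F (u, v) = (0, B v)"
  shows "trace_on (UNIV \<times> V) F = (\<Sum>e\<in>E. cinner (B e) e)"
proof -
  define E' where "E' = (\<lambda>e. (0::'b, e)) ` E"
  have "trace_on (UNIV \<times> V) F = (\<Sum>e'\<in>E'. cinner (F e') e')"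
  proof (rule trace_on_eq[OF subspace_UNIV_Times[OF V]])
    show "F x \<in> UNIV \<times> V" if "x \<in> UNIV \<times> V" for x
      using that maps F by auto
    show "clinear_on (UNIV \<times> V) F"
      using lin V F by (auto simp: clinear_on_def scaleC_Pair complex_vector.subspace_def)
    show "hermitian_on (UNIV \<times> V) F"
      using herm F by (auto simp: hermitian_on_def cinner_Pair)
    have "F (u, v) \<in> cspan E'" if "v \<in> V" for u v
      using F[OF that] Pair_zero_in_cspan[OF E(1) subsetD[OF E(4) maps[OF that]]] by (simp add: E'_def)
    then show "F ` (UNIV \<times> V) \<subseteq> cspan E'"
      by auto
    show "corthonormal E'"
      using E(3) by (auto simp: E'_def corthonormal_def cinner_Pair)
  qed (use E in \<open>auto simp: E'_def\<close>)
  also have "\<dots> = (\<Sum>e\<in>E. cinner (F (0, e)) (0, e))"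
    unfolding E'_def by (simp add: sum.reindex inj_on_def)
  also have "\<dots> = (\<Sum>e\<in>E. cinner (B e) e)"
  proof (rule sum.cong)
    fix e
    assume "e \<in> E"
    then show "cinner (F (0, e)) (0, e) = cinner (B e) e"
      using E(2) F by (auto simp: cinner_Pair)
  qed simp
  finally show ?thesis .
qed

section \<open>Ranks\<close>

lemma finite_cspan_cover_image_iff:
  fixes f :: "'a::complex_vector \<Rightarrow> 'b::complex_vector"
  assumes lin: "Vector_Spaces.linear (*\<^sub>C) (*\<^sub>C) f" and inj: "inj_on f (cspan X)"
  shows "(\<exists>B. finite B \<and> f ` X \<subseteq> cspan B) \<longleftrightarrow> (\<exists>B. finite B \<and> X \<subseteq> cspan B)"
proof
  assume "\<exists>B. finite B \<and> f ` X \<subseteq> cspan B"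
  then obtain B where B: "finite B" "f ` X \<subseteq> cspan B"
    by blast
  obtain g where g: "Vector_Spaces.linear (*\<^sub>C) (*\<^sub>C) g" "\<forall>x\<in>cspan X. g (f x) = x"
    using vector_space_pair.linear_inj_on_left_inverse[OF
        vector_space_pair.intro[OF complex_vector.vector_space_axioms complex_vector.vector_space_axioms]
        lin inj[unfolded cspan_raw_def]]
    unfolding cspan_raw_def by blast
  have "X = g ` f ` X"
    using g(2) complex_vector.span_superset[of X] by (force simp: image_image)
  also have "\<dots> \<subseteq> cspan (g ` B)"
    using module_hom.spans_image[of "(*\<^sub>C)" "(*\<^sub>C)" g "f ` X" B] g(1) B(2)
    unfolding cspan_raw_def by (simp add: linear_iff_module_hom)
  finally show "\<exists>B. finite B \<and> X \<subseteq> cspan B"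
    using B(1) by blast
next
  assume "\<exists>B. finite B \<and> X \<subseteq> cspan B"
  then obtain B where "finite B" "X \<subseteq> cspan B"
    by blast
  moreover have "f ` X \<subseteq> cspan (f ` B)"
    using module_hom.spans_image[of "(*\<^sub>C)" "(*\<^sub>C)" f X B] lin \<open>X \<subseteq> cspan B\<close>
    unfolding cspan_raw_def by (simp add: linear_iff_module_hom)
  ultimately show "\<exists>B. finite B \<and> f ` X \<subseteq> cspan B"
    by blast
qed

lemma cdim_image_inj:
  fixes f :: "'a::complex_vector \<Rightarrow> 'b::complex_vector"
  assumes lin: "Vector_Spaces.linear (*\<^sub>C) (*\<^sub>C) f" and inj: "inj_on f (cspan X)"
    and "finite B0" "X \<subseteq> cspan B0"
  shows "cdim (f ` X) = cdim X"
proof -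
  have f: "module_hom (*\<^sub>C) (*\<^sub>C) f"
    using lin by (simp add: linear_iff_module_hom)
  obtain B where B: "finite B" "B \<subseteq> X" "complex_vector.independent B" "X \<subseteq> cspan B" "card B = cdim X"
    by (rule finite_dim_basis[OF assms(3,4)])
  have injB: "inj_on f (cspan B)"
    using inj complex_vector.span_mono[OF B(2)] inj_on_subset by blast
  have "complex_vector.independent (f ` B)"
    using module_hom.independent_injective_image[OF f B(3)[unfolded cspan_raw_def]] injB
    unfolding cspan_raw_def by blast
  moreover have "f ` X \<subseteq> cspan (f ` B)"
    using module_hom.spans_image[OF f, of X B] B(4) unfolding cspan_raw_def by blast
  moreover have "card (f ` B) = card B"
    using injB complex_vector.span_superset[of B] by (intro card_image) (rule inj_on_subset)
  ultimately show ?thesis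
    using B by (intro complex_vector.dim_unique) auto
qed

lemma rank_on_eq_image_inj:
  fixes f :: "'a::chilbert \<Rightarrow> 'b::chilbert"
  assumes "Vector_Spaces.linear (*\<^sub>C) (*\<^sub>C) f" "inj_on f (cspan (A ` M))"
    and "A' ` M' = f ` A ` M"
  shows "rank_on M' A' = rank_on M A"
  unfolding rank_on_def assms(3)
  using finite_cspan_cover_image_iff[OF assms(1,2)] cdim_image_inj[OF assms(1,2)] by auto

lemma subspace_subset_image_inj:
  fixes D :: "'a::complex_vector \<Rightarrow> 'a"
  assumes V: "complex_vector.subspace V" and fin: "finite B0" "V \<subseteq> cspan B0"
    and lin: "clinear D" and maps: "D ` V \<subseteq> V" and inj: "inj_on D V"
  shows "V \<subseteq> D ` V"
proof -
  have D: "module_hom (*\<^sub>C) (*\<^sub>C) D"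
    using clinear_imp_linear[OF lin] by (simp add: linear_iff_module_hom)
  obtain B where B: "finite B" "B \<subseteq> V" "complex_vector.independent B" "V \<subseteq> cspan B" "card B = cdim V"
    by (rule finite_dim_basis[OF fin])
  have span: "cspan B \<subseteq> V"
    using B(2) V by (rule complex_vector.span_minimal)
  then have injB: "inj_on D (cspan B)"
    using inj inj_on_subset by blast
  have indep: "complex_vector.independent (D ` B)"
    using module_hom.independent_injective_image[OF D B(3)[unfolded cspan_raw_def]] injB
    unfolding cspan_raw_def by blast
  have card: "card (D ` B) = card B"
    using injB complex_vector.span_superset[of B] by (intro card_image) (rule inj_on_subset)
  have "V \<subseteq> cspan (D ` B)"
  proof (rule subsetI, rule ccontr)
    fix v
    assume "v \<in> V" and v: "v \<notin> cspan (D ` B)"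
    have "complex_vector.independent (insert v (D ` B))"
      using complex_vector.independent_insertI[OF v indep] .
    moreover have "insert v (D ` B) \<subseteq> cspan B"
      using \<open>v \<in> V\<close> B(2,4) maps by auto
    ultimately have "card (insert v (D ` B)) \<le> card B"
      using complex_vector.independent_span_bound[OF B(1)] by blast
    moreover have "card (insert v (D ` B)) = card B + 1"
      using v card B(1) complex_vector.span_superset[of "D ` B"] by (subst card_insert_disjoint) auto
    ultimately show False
      by simp
  qed
  also have "cspan (D ` B) = D ` cspan B"
    using module_hom.span_image[OF D, of B] unfolding cspan_raw_def .
  also have "\<dots> \<subseteq> D ` V"
    using span by (rule image_mono)
  finally show ?thesis .
qed

section \<open>The curvature\<close>

lemma Lim_at_left_one_interpolation:
  fixes f g :: "real \<Rightarrow> complex"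
  assumes ev: "eventually (\<lambda>r. g r = complex_of_real (r\<^sup>2) * f r + complex_of_real (1 - r\<^sup>2) * c) (at_left 1)"
  shows "Lim (at_left 1) g = Lim (at_left 1) f"
proof -
  have r1: "((\<lambda>r. complex_of_real (r\<^sup>2)) \<longlongrightarrow> 1) (at_left (1::real))"
  proof -
    have "((\<lambda>r::real. r\<^sup>2) \<longlongrightarrow> 1\<^sup>2) (at_left 1)" by (intro tendsto_intros)
    then show ?thesis using tendsto_of_real by fastforce
  qed
  have r0: "((\<lambda>r. complex_of_real (1 - r\<^sup>2)) \<longlongrightarrow> 0) (at_left (1::real))"
  proof -
    have "((\<lambda>r::real. 1 - r\<^sup>2) \<longlongrightarrow> 1 - 1\<^sup>2) (at_left 1)" by (intro tendsto_intros)
    then show ?thesis using tendsto_of_real by fastforce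
  qed
  have pos: "eventually (\<lambda>r::real. r > 0) (at_left 1)"
    using eventually_at_left_real[of 0 1] by (auto elim: eventually_mono)
  have iff: "(g \<longlongrightarrow> L) (at_left 1) \<longleftrightarrow> (f \<longlongrightarrow> L) (at_left 1)" for L
  proof
    assume "(f \<longlongrightarrow> L) (at_left 1)"
    then have "((\<lambda>r. complex_of_real (r\<^sup>2) * f r + complex_of_real (1 - r\<^sup>2) * c) \<longlongrightarrow> 1 * L + 0 * c) (at_left 1)"
      by (intro tendsto_intros r1 r0)
    then show "(g \<longlongrightarrow> L) (at_left 1)" using ev by (simp add: tendsto_cong)
  next
    assume g: "(g \<longlongrightarrow> L) (at_left 1)"
    have ev2: "eventually (\<lambda>r. f r = (g r - complex_of_real (1 - r\<^sup>2) * c) / complex_of_real (r\<^sup>2)) (at_left 1)"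
      using ev pos by eventually_elim (auto simp: field_simps)
    have "((\<lambda>r. (g r - complex_of_real (1 - r\<^sup>2) * c) / complex_of_real (r\<^sup>2)) \<longlongrightarrow> (L - 0 * c) / 1) (at_left 1)"
      by (intro tendsto_intros g r0 r1) simp
    then show "(f \<longlongrightarrow> L) (at_left 1)" using ev2 by (simp add: tendsto_cong)
  qed
  have "(\<lambda>L. (g \<longlongrightarrow> L) (at_left 1)) = (\<lambda>L. (f \<longlongrightarrow> L) (at_left 1))" using iff by blast
  then show ?thesis by (simp add: t2_space_class.Lim_def)
qed

definition curvature_kernel :: "'a::chilbert set \<Rightarrow> ('a \<Rightarrow> 'a) \<Rightarrow> real \<Rightarrow> complex \<Rightarrow> 'a \<Rightarrow> 'a" where
  "curvature_kernel M T r z = (\<lambda>x. defect_on M T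
     (inv_on M (\<lambda>y. y - (complex_of_real r * z) *\<^sub>C adjoint_on M T y)
       (inv_on M (\<lambda>y. y - (complex_of_real r * cnj z) *\<^sub>C T y) (defect_on M T x))))"

lemma curvature_on_eq:
  "curvature_on M T = complex_of_real (1 / (2 * pi)) * (LINT t:{0..2*pi}|lborel.
     Lim (at_left 1) (\<lambda>r. complex_of_real (1 - r\<^sup>2) * trace_on M (curvature_kernel M T r (cis t))))"
  by (simp add: curvature_on_def curvature_kernel_def Let_def)

section \<open>The dilation \<open>Q\<close>\<close>

lemma bop_on_add: "bop_on M S \<Longrightarrow> x \<in> M \<Longrightarrow> y \<in> M \<Longrightarrow> S (x + y) = S x + S y"
  and bop_on_scaleC: "bop_on M S \<Longrightarrow> x \<in> M \<Longrightarrow> S (c *\<^sub>C x) = c *\<^sub>C S x"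
  and bop_on_mem: "bop_on M S \<Longrightarrow> x \<in> M \<Longrightarrow> S x \<in> M"
  by (simp_all add: bop_on_def)

text \<open>Together, the next two lemmas show that the positive square root of an orthogonal
  projection is the projection itself.\<close>

lemma positive_sqrt_vanishes_on_kernel:
  assumes M: "complex_vector.subspace M" and S: "bop_on M S"
    and pos: "\<And>x. x \<in> M \<Longrightarrow> 0 \<le> Re (cinner (S x) x)"
    and sq: "\<And>x. x \<in> M \<Longrightarrow> S (S x) = P x" and x: "x \<in> M" "P x = 0"
  shows "S x = 0"
proof -
  define u where "u = S x"
  have u: "u \<in> M" "S u = 0"
    using bop_on_mem[OF S x(1)] sq[OF x(1)] x(2) by (simp_all add: u_def)
  have "0 \<le> Re (cinner u x) * t\<^sup>2 + (norm u)\<^sup>2 * t" for t :: real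
  proof -
    have tx: "complex_of_real t *\<^sub>C x \<in> M"
      using M x(1) by (rule complex_vector.subspace_scale)
    then have "u + complex_of_real t *\<^sub>C x \<in> M"
      using M u(1) by (simp add: complex_vector.subspace_add)
    then have "0 \<le> Re (cinner (S (u + complex_of_real t *\<^sub>C x)) (u + complex_of_real t *\<^sub>C x))"
      by (rule pos)
    also have "S (u + complex_of_real t *\<^sub>C x) = complex_of_real t *\<^sub>C u"
      using bop_on_add[OF S u(1) tx] bop_on_scaleC[OF S x(1)] u(2) by (simp add: u_def)
    finally show ?thesis
      by (simp add: cinner_scaleC_left cinner_add_right cinner_scaleC_right cinner_self_norm
          power2_eq_square algebra_simps)
  qed
  then have "(norm u)\<^sup>2 = 0"
    by (rule quadratic_nonneg_imp_linear_coeff_zero)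
  then show ?thesis
    by (simp add: u_def)
qed

lemma positive_sqrt_fixes_fixed_points:
  assumes M: "complex_vector.subspace M" and S: "bop_on M S"
    and pos: "\<And>x. x \<in> M \<Longrightarrow> 0 \<le> Re (cinner (S x) x)"
    and sq: "\<And>x. x \<in> M \<Longrightarrow> S (S x) = P x" and x: "x \<in> M" "P x = x"
  shows "S x = x"
proof -
  define y where "y = S x - x"
  have y: "y \<in> M"
    using bop_on_mem[OF S x(1)] x(1) M by (simp add: y_def complex_vector.subspace_diff)
  have "S y = S (S x) - S x"
    using bop_on_add[OF S y x(1)] by (simp add: y_def eq_diff_eq)
  also have "\<dots> = - y"
    using sq[OF x(1)] x(2) by (simp add: y_def)
  finally have "0 \<le> - (norm y)\<^sup>2"
    using pos[OF y] by (simp add: cinner_minus_left cinner_self_norm)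
  then show ?thesis
    by (simp add: y_def)
qed

definition snd_proj :: "'a::zero \<times> 'b \<Rightarrow> 'a \<times> 'b" where
  "snd_proj = (\<lambda>(u, v). (0, v))"

locale finite_defect_contraction =
  fixes T :: "'a::chilbert \<Rightarrow> 'a"
  assumes bounded: "bop_on UNIV T"
    and contraction: "\<forall>x. norm (T x) \<le> norm x"
    and finite_rank: "rank_on UNIV (defect_on UNIV T) \<noteq> \<infinity>"
begin

abbreviation "Ts \<equiv> adjoint_on UNIV T"
abbreviation "D \<equiv> defect_on UNIV T"
abbreviation "R \<equiv> range (\<lambda>x. x - T (Ts x))"

lemma clinear_T: "clinear T"
  using bounded bop_on_UNIV_iff by blast

lemma norm_T_le: "norm (T x) \<le> norm x"
  using contraction by blast

lemma cinner_T_Ts: "cinner (T x) y = cinner x (Ts y)"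
  by (rule cinner_adjoint_on_UNIV[OF bounded])

lemma cinner_Ts_T: "cinner (Ts y) x = cinner y (T x)"
  by (metis cinner_T_Ts cnj_cinner)

lemma clinear_Ts: "clinear Ts"
  by (rule clinear_adjoint[OF cinner_T_Ts])

lemma norm_Ts_le: "norm (Ts y) \<le> norm y"
  using norm_adjoint_le[of T Ts 1 y] cinner_T_Ts norm_T_le by simp

lemma hermitian_contraction_T_Ts: "hermitian_contraction (\<lambda>x. T (Ts x))"
proof
  show "clinear (\<lambda>x. T (Ts x))"
    by (rule clinear_compose[OF clinear_T clinear_Ts])
  show "norm (T (Ts v)) \<le> norm v" for v
    using norm_T_le[of "Ts v"] norm_Ts_le[of v] by simp
  show "hermitian (\<lambda>x. T (Ts x))"
    unfolding hermitian_def by (simp add: cinner_T_Ts cinner_Ts_T)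
qed

lemma defect: "bop_on UNIV D" "\<And>x. Im (cinner (D x) x) = 0" "\<And>x. D (D x) = x - T (Ts x)"
  using hermitian_contraction.sqrt_on_one_minus[OF hermitian_contraction_T_Ts]
  unfolding defect_on_def by blast+

lemma clinear_D: "clinear D"
  using defect(1) bop_on_UNIV_iff by blast

lemma cinner_D: "cinner (D x) y = cinner x (D y)"
  using hermitianI_Im_cinner[OF clinear_D defect(2)] by (simp add: hermitian_def)

lemma defect_square_eq_0_imp: "D (D w) = 0 \<Longrightarrow> D w = 0"
  using cinner_D[of w "D w"] by (simp add: cinner_eq_zero_iff)

lemma range_defect: "R = range D"
proof
  show "R \<subseteq> range D"
    by (auto simp: defect(3)[symmetric])
  obtain B0 where B0: "finite B0" "range D \<subseteq> cspan B0"
    using finite_rank unfolding rank_on_def by (auto split: if_splits)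
  have "inj_on D (range D)"
  proof (rule inj_onI)
    fix x y
    assume "x \<in> range D" "y \<in> range D" "D x = D y"
    then obtain a b where ab: "x = D a" "y = D b"
      by auto
    have "D (D (a - b)) = 0"
      using \<open>D x = D y\<close> ab by (simp add: clinear_D clinear_diff)
    then have "D (a - b) = 0"
      by (rule defect_square_eq_0_imp)
    then show "x = y"
      using ab by (simp add: clinear_D clinear_diff)
  qed
  then have "range D \<subseteq> D ` range D"
    using subspace_range_clinear[OF clinear_D] B0 clinear_D by (intro subspace_subset_image_inj) auto
  also have "D ` range D = R"
    by (auto simp: defect(3)[symmetric] image_image)
  finally show "range D \<subseteq> R" .
qed

lemma subspace_R: "complex_vector.subspace R"
  unfolding range_defect by (rule subspace_range_clinear[OF clinear_D])

lemma defect_in_R: "D x \<in> R"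
  unfolding range_defect by simp

definition Rbasis :: "'a set" where
  "Rbasis = (SOME E. finite E \<and> E \<subseteq> R \<and> corthonormal E \<and> R \<subseteq> cspan E)"

lemma Rbasis: "finite Rbasis" "Rbasis \<subseteq> R" "corthonormal Rbasis" "R \<subseteq> cspan Rbasis"
proof -
  obtain B0 where "finite B0" "R \<subseteq> cspan B0"
    using finite_rank unfolding rank_on_def range_defect by (auto split: if_splits)
  then have "\<exists>E. finite E \<and> E \<subseteq> R \<and> corthonormal E \<and> R \<subseteq> cspan E"
    by (rule finite_dim_subspace_orthonormal_basis[OF subspace_R])
  from someI_ex[OF this] show "finite Rbasis" "Rbasis \<subseteq> R" "corthonormal Rbasis" "R \<subseteq> cspan Rbasis"
    unfolding Rbasis_def by blast+
qed

definition res :: "complex \<Rightarrow> 'a \<Rightarrow> 'a" where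
  "res w = inv_on UNIV (\<lambda>y. y - w *\<^sub>C T y)"

definition res_adj :: "complex \<Rightarrow> 'a \<Rightarrow> 'a" where
  "res_adj w = inv_on UNIV (\<lambda>y. y - w *\<^sub>C Ts y)"

lemma res:
  assumes "cmod w < 1"
  shows "res w x - w *\<^sub>C T (res w x) = x" "res w (x - w *\<^sub>C T x) = x" "clinear (res w)"
  using inv_on_resolvent[OF clinear_T norm_T_le assms] unfolding res_def by blast+

lemma res_adj:
  assumes "cmod w < 1"
  shows "res_adj w x - w *\<^sub>C Ts (res_adj w x) = x" "res_adj w (x - w *\<^sub>C Ts x) = x"
    "clinear (res_adj w)"
  using inv_on_resolvent[OF clinear_Ts norm_Ts_le assms] unfolding res_adj_def by blast+

lemma cinner_res_adj:
  assumes "cmod w < 1"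
  shows "cinner (res_adj (cnj w) a) b = cinner a (res w b)"
proof -
  have "cmod (cnj w) < 1"
    using assms by simp
  have "cinner (res_adj (cnj w) a) b = cinner (res_adj (cnj w) a) (res w b - w *\<^sub>C T (res w b))"
    using res(1)[OF assms] by simp
  also have "\<dots> = cinner (res_adj (cnj w) a - cnj w *\<^sub>C Ts (res_adj (cnj w) a)) (res w b)"
    by (simp add: cinner_diff_left cinner_diff_right cinner_scaleC_left cinner_scaleC_right cinner_Ts_T)
  also have "\<dots> = cinner a (res w b)"
    using res_adj(1)[OF \<open>cmod (cnj w) < 1\<close>] by simp
  finally show ?thesis .
qed


definition M :: "('a \<times> 'a) set" where
  "M = UNIV \<times> R"

definition Q :: "'a \<times> 'a \<Rightarrow> 'a \<times> 'a" where
  "Q = (\<lambda>(x, y). (T x + D y, 0))"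

definition Qadj :: "'a \<times> 'a \<Rightarrow> 'a \<times> 'a" where
  "Qadj = (\<lambda>(u, v). (Ts u, D u))"

lemma mem_M: "(x, y) \<in> M \<longleftrightarrow> y \<in> R"
  by (simp add: M_def)

lemma subspace_M: "complex_vector.subspace M"
  unfolding M_def by (rule subspace_UNIV_Times[OF subspace_R])

lemma zero_in_R: "0 \<in> R"
  using complex_vector.subspace_0[OF subspace_R] .

lemma Q_in_M: "Q v \<in> M"
  by (cases v) (simp add: Q_def mem_M zero_in_R)

lemma Qadj_in_M: "Qadj v \<in> M"
  by (cases v) (simp add: Qadj_def mem_M defect_in_R)

lemma cinner_Q_Qadj: "cinner (Q x) y = cinner x (Qadj y)"
  by (cases x, cases y) (simp add: Q_def Qadj_def cinner_Pair cinner_add_left cinner_T_Ts cinner_D)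

lemma adjoint_on_M_Q: "y \<in> M \<Longrightarrow> adjoint_on M Q y = Qadj y"
  by (rule adjoint_on_eqI[OF subspace_M]) (auto simp: Qadj_in_M cinner_Q_Qadj)

lemma Q_Qadj: "Q (Qadj v) = (fst v, 0)"
  by (cases v) (simp add: Q_def Qadj_def defect(3))

lemma one_minus_Q_Qadj: "v \<in> M \<Longrightarrow> v - Q (adjoint_on M Q v) = snd_proj v"
  by (cases v) (simp add: adjoint_on_M_Q Q_Qadj snd_proj_def)

lemma clinear_Q: "clinear Q"
  unfolding clinear_def Q_def
  by (auto simp: clinear_T clinear_D clinear_add clinear_scaleC scaleC_Pair scaleC_add_right)

lemma bop_on_M_Q: "bop_on M Q"
proof -
  obtain K where K: "\<And>x. norm (D x) \<le> K * norm x"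
    using defect(1) bop_on_UNIV_iff by blast
  have "norm (Q v) \<le> (1 + \<bar>K\<bar>) * norm v" for v
  proof -
    obtain a b where ab: "v = (a, b)"
      by (cases v)
    have "norm (Q v) \<le> norm (T a) + norm (D b)"
      using norm_triangle_ineq by (simp add: ab Q_def norm_Pair)
    also have "\<dots> \<le> norm a + \<bar>K\<bar> * norm b"
      using norm_T_le[of a] K[of b] abs_ge_self[of K] mult_right_mono[of K "\<bar>K\<bar>" "norm b"] by simp
    also have "\<dots> \<le> norm v + \<bar>K\<bar> * norm v"
      using norm_fst_le[of a b] norm_snd_le[of b a] by (simp add: ab add_mono mult_left_mono)
    finally show ?thesis
      by (simp add: algebra_simps)
  qed
  then have "\<exists>K. \<forall>x\<in>M. norm (Q x) \<le> K * norm x"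
    by blast
  then show ?thesis
    using clinear_Q by (simp add: bop_on_def Q_in_M clinear_add clinear_scaleC)
qed

lemma defect_Q: "x \<in> M \<Longrightarrow> defect_on M Q x = snd_proj x"
proof -
  assume x: "x \<in> M"
  have "bop_on M snd_proj"
    unfolding bop_on_def
    by (auto simp: snd_proj_def mem_M scaleC_Pair norm_Pair M_def intro!: exI[of _ 1])
  moreover have "\<forall>x\<in>M. Im (cinner (snd_proj x) x) = 0 \<and> 0 \<le> Re (cinner (snd_proj x) x)"
    by (auto simp: snd_proj_def cinner_Pair cinner_ge_zero)
  moreover have "\<forall>x\<in>M. snd_proj (snd_proj x) = x - Q (adjoint_on M Q x)"
    by (auto simp: one_minus_Q_Qadj snd_proj_def)
  ultimately have "\<exists>S. bop_on M S \<and> (\<forall>x\<in>M. Im (cinner (S x) x) = 0 \<and> 0 \<le> Re (cinner (S x) x))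
      \<and> (\<forall>x\<in>M. S (S x) = x - Q (adjoint_on M Q x))"
    by blast
  then have S: "bop_on M (defect_on M Q)" "\<And>x. x \<in> M \<Longrightarrow> 0 \<le> Re (cinner (defect_on M Q x) x)"
    "\<And>x. x \<in> M \<Longrightarrow> defect_on M Q (defect_on M Q x) = snd_proj x"
    unfolding defect_on_def sqrt_on_def by (auto dest!: someI_ex simp: one_minus_Q_Qadj)
  obtain a b where ab: "x = (a, b)"
    by (cases x)
  have "b \<in> R"
    using x ab by (simp add: mem_M)
  then have M: "(a, 0) \<in> M" "(0, b) \<in> M"
    by (simp_all add: mem_M zero_in_R)
  have "defect_on M Q (a, 0) = 0"
    using positive_sqrt_vanishes_on_kernel[OF subspace_M S M(1)] by (simp add: snd_proj_def zero_prod_def)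
  moreover have "defect_on M Q (0, b) = (0, b)"
    using positive_sqrt_fixes_fixed_points[OF subspace_M S M(2)] by (simp add: snd_proj_def)
  moreover have "defect_on M Q x = defect_on M Q (a, 0) + defect_on M Q (0, b)"
    using bop_on_add[OF S(1) M] by (simp add: ab)
  ultimately show ?thesis
    by (simp add: ab snd_proj_def)
qed

lemma inv_on_M_resolvent_Q:
  assumes w: "cmod w < 1" and "x \<in> M"
  shows "inv_on M (\<lambda>y. y - w *\<^sub>C Q y) x = (case x of (a, b) \<Rightarrow> (res w (a + w *\<^sub>C D b), b))"
proof (rule inv_on_eqI[OF _ \<open>x \<in> M\<close>])
  fix x
  assume x: "x \<in> M"
  obtain a b where ab: "x = (a, b)"
    by (cases x)
  have "b \<in> R"
    using x ab by (simp add: mem_M)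
  let ?B = "\<lambda>x. case x of (a, b) \<Rightarrow> (res w (a + w *\<^sub>C D b), b)"
  have "?B x - w *\<^sub>C Q (?B x) = (res w (a + w *\<^sub>C D b) - w *\<^sub>C T (res w (a + w *\<^sub>C D b)) - w *\<^sub>C D b, b)"
    by (simp add: ab Q_def scaleC_Pair scaleC_add_right algebra_simps)
  also have "\<dots> = x"
    using res(1)[OF w] by (simp add: ab)
  finally have "?B x - w *\<^sub>C Q (?B x) = x" .
  moreover have "?B (x - w *\<^sub>C Q x) = x"
    using res(2)[OF w] by (simp add: ab Q_def scaleC_Pair scaleC_add_right algebra_simps)
  ultimately show "?B x \<in> M \<and> ?B x - w *\<^sub>C Q (?B x) = x \<and> ?B (x - w *\<^sub>C Q x) = x"
    using \<open>b \<in> R\<close> by (simp add: ab mem_M)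
qed

lemma inv_on_M_resolvent_Qadj:
  assumes w: "cmod w < 1" and "x \<in> M"
  shows "inv_on M (\<lambda>y. y - w *\<^sub>C adjoint_on M Q y) x
    = (case x of (a, b) \<Rightarrow> (res_adj w a, b + w *\<^sub>C D (res_adj w a)))"
proof (rule inv_on_eqI[OF _ \<open>x \<in> M\<close>])
  fix x
  assume x: "x \<in> M"
  obtain a b where ab: "x = (a, b)"
    by (cases x)
  have "b \<in> R"
    using x ab by (simp add: mem_M)
  let ?B = "\<lambda>x. case x of (a, b) \<Rightarrow> (res_adj w a, b + w *\<^sub>C D (res_adj w a))"
  have BM: "?B x \<in> M"
    using \<open>b \<in> R\<close> subspace_R defect_in_R
    by (simp add: ab mem_M complex_vector.subspace_add complex_vector.subspace_scale)
  then have "?B x - w *\<^sub>C adjoint_on M Q (?B x) = (res_adj w a - w *\<^sub>C Ts (res_adj w a), b)"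
    by (simp add: adjoint_on_M_Q ab Qadj_def scaleC_Pair)
  also have "\<dots> = x"
    using res_adj(1)[OF w] by (simp add: ab)
  finally have "?B x - w *\<^sub>C adjoint_on M Q (?B x) = x" .
  moreover have "?B (x - w *\<^sub>C adjoint_on M Q x) = x"
    using x res_adj(2)[OF w] by (simp add: adjoint_on_M_Q ab Qadj_def scaleC_Pair)
  ultimately show "?B x \<in> M \<and> ?B x - w *\<^sub>C adjoint_on M Q (?B x) = x \<and> ?B (x - w *\<^sub>C adjoint_on M Q x) = x"
    using BM by blast
qed


abbreviation KT :: "real \<Rightarrow> complex \<Rightarrow> 'a \<Rightarrow> 'a" where
  "KT \<equiv> curvature_kernel UNIV T"

lemma curvature_kernel_UNIV:
  "KT r z = (\<lambda>x. D (res_adj (complex_of_real r * z) (res (complex_of_real r * cnj z) (D x))))"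
  by (simp add: curvature_kernel_def res_def res_adj_def)

lemma cmod_of_real_mult_less_1: "\<bar>r\<bar> < 1 \<Longrightarrow> cmod z = 1 \<Longrightarrow> cmod (complex_of_real r * z) < 1"
  by (simp add: norm_mult)

lemma clinear_KT: "\<bar>r\<bar> < 1 \<Longrightarrow> cmod z = 1 \<Longrightarrow> clinear (KT r z)"
  unfolding curvature_kernel_UNIV
  by (intro clinear_compose[OF clinear_D] clinear_compose[OF res_adj(3)] clinear_compose[OF res(3)]
      clinear_D cmod_of_real_mult_less_1) auto

text \<open>\<open>\<langle>KT x, y\<rangle> = \<langle>V D x, V D y\<rangle>\<close> with \<open>V = (1 - r z\<^sup>* T)\<^sup>-\<^sup>1\<close>.\<close>

lemma hermitian_KT:
  assumes "\<bar>r\<bar> < 1" "cmod z = 1"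
  shows "hermitian (KT r z)"
proof -
  define w where "w = complex_of_real r * cnj z"
  have w: "cmod w < 1"
    using assms by (simp add: w_def norm_mult)
  have "cinner (KT r z x) y = cinner (res w (D x)) (res w (D y))" for x y
    unfolding curvature_kernel_UNIV
    by (simp add: w_def cinner_D[of "res_adj _ _"] cinner_res_adj[OF w, unfolded w_def, simplified])
  then show ?thesis
    unfolding hermitian_def by (metis cnj_cinner)
qed

lemma KT_in_R: "KT r z x \<in> R"
  unfolding curvature_kernel_UNIV by (rule defect_in_R)

lemma trace_KT:
  assumes "\<bar>r\<bar> < 1" "cmod z = 1"
  shows "trace_on UNIV (KT r z) = (\<Sum>e\<in>Rbasis. cinner (KT r z e) e)"
proof (rule trace_on_eq)
  show "clinear_on UNIV (KT r z)"
    using clinear_KT[OF assms] by (simp add: clinear_on_def clinear_def)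
  show "hermitian_on UNIV (KT r z)"
    using hermitian_KT[OF assms] by (simp add: hermitian_on_def hermitian_def)
  show "KT r z ` UNIV \<subseteq> cspan Rbasis"
    using KT_in_R Rbasis(4) by blast
qed (use Rbasis in auto)

text \<open>Solving the two triangular systems: the defect of \<open>Q\<close> only sees the second component.\<close>

lemma curvature_kernel_M_Q:
  assumes r: "\<bar>r\<bar> < 1" and z: "cmod z = 1" and x: "x \<in> M"
  shows "curvature_kernel M Q r z x = (0, snd x + complex_of_real (r\<^sup>2) *\<^sub>C KT r z (snd x))"
proof -
  define w where "w = complex_of_real r * cnj z"
  define w' where "w' = complex_of_real r * z"
  have w: "cmod w < 1" and w': "cmod w' < 1"
    using r z by (simp_all add: w_def w'_def norm_mult)
  obtain a b where ab: "x = (a, b)"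
    by (cases x)
  have b: "b \<in> R"
    using x ab by (simp add: mem_M)
  have "(0, b) \<in> M" "(res w (w *\<^sub>C D b), b) \<in> M"
    using b by (simp_all add: mem_M)
  define u where "u = res_adj w' (res w (w *\<^sub>C D b))"
  have "(u, b + w' *\<^sub>C D u) \<in> M"
    using b subspace_R defect_in_R
    by (simp add: mem_M complex_vector.subspace_add complex_vector.subspace_scale)
  have "curvature_kernel M Q r z x = defect_on M Q (u, b + w' *\<^sub>C D u)"
    using defect_Q[OF x] inv_on_M_resolvent_Q[OF w \<open>(0, b) \<in> M\<close>]
      inv_on_M_resolvent_Qadj[OF w' \<open>(res w (w *\<^sub>C D b), b) \<in> M\<close>]
    by (simp add: curvature_kernel_def ab snd_proj_def w_def[symmetric] w'_def[symmetric] u_def)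
  also have "\<dots> = (0, b + w' *\<^sub>C D u)"
    using defect_Q[OF \<open>(u, b + w' *\<^sub>C D u) \<in> M\<close>] by (simp add: snd_proj_def)
  also have "w' *\<^sub>C D u = (w' * w) *\<^sub>C KT r z b"
    unfolding u_def curvature_kernel_UNIV w_def[symmetric] w'_def[symmetric]
    by (simp add: clinear_D clinear_scaleC res(3)[OF w] res_adj(3)[OF w'] scaleC_scaleC)
  also have "w' * w = complex_of_real (r\<^sup>2)"
    using z complex_norm_square[of z] by (simp add: w_def w'_def power2_eq_square mult_ac)
  finally show ?thesis
    by (simp add: ab)
qed

lemma trace_curvature_kernel_M_Q:
  assumes r: "\<bar>r\<bar> < 1" and z: "cmod z = 1"
  shows "trace_on M (curvature_kernel M Q r z)
    = of_nat (card Rbasis) + complex_of_real (r\<^sup>2) * trace_on UNIV (KT r z)"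
proof -
  define B where "B v = v + complex_of_real (r\<^sup>2) *\<^sub>C KT r z v" for v
  have "trace_on M (curvature_kernel M Q r z) = (\<Sum>e\<in>Rbasis. cinner (B e) e)"
    unfolding M_def
  proof (rule trace_on_Pair_zero[OF subspace_R _ _ _ Rbasis])
    show "B v \<in> R" if "v \<in> R" for v
      using that subspace_R KT_in_R
      by (simp add: B_def complex_vector.subspace_add complex_vector.subspace_scale)
    show "clinear_on R B"
      using clinear_KT[OF r z]
      by (simp add: clinear_on_def B_def clinear_add clinear_scaleC scaleC_add_right
          complex_vector.scale_left_commute)
    show "hermitian_on R B"
      using hermitian_KT[OF r z]
      by (simp add: hermitian_on_def hermitian_def B_def cinner_add_left cinner_add_right
          cinner_scaleC_left cinner_scaleC_right)
    show "curvature_kernel (UNIV \<times> R) Q r z (u, v) = (0, B v)" if "v \<in> R" for u v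
      using curvature_kernel_M_Q[OF r z] that by (simp add: M_def B_def)
  qed
  also have "\<dots> = (\<Sum>e\<in>Rbasis. 1 + complex_of_real (r\<^sup>2) * cinner (KT r z e) e)"
    using Rbasis(3) by (intro sum.cong) (auto simp: B_def corthonormal_def cinner_add_left cinner_scaleC_left)
  also have "\<dots> = of_nat (card Rbasis) + complex_of_real (r\<^sup>2) * trace_on UNIV (KT r z)"
    by (simp add: trace_KT[OF r z] sum.distrib sum_distrib_left)
  finally show ?thesis .
qed

text \<open>As \<open>r \<rightarrow> 1\<close> the factor \<open>1 - r\<^sup>2\<close> kills the contribution \<open>dim R\<close> of the defect space.\<close>

lemma curvature_Q: "curvature_on M Q = curvature_on UNIV T"
proof -
  have "Lim (at_left 1) (\<lambda>r. complex_of_real (1 - r\<^sup>2) * trace_on M (curvature_kernel M Q r (cis t)))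
      = Lim (at_left 1) (\<lambda>r. complex_of_real (1 - r\<^sup>2) * trace_on UNIV (KT r (cis t)))" for t
  proof (rule Lim_at_left_one_interpolation[where c = "of_nat (card Rbasis)"])
    have "eventually (\<lambda>r::real. r \<in> {0<..<1}) (at_left 1)"
      by (rule eventually_at_left_real) simp
    then show "\<forall>\<^sub>F r in at_left 1. complex_of_real (1 - r\<^sup>2) * trace_on M (curvature_kernel M Q r (cis t))
        = complex_of_real (r\<^sup>2) * (complex_of_real (1 - r\<^sup>2) * trace_on UNIV (KT r (cis t)))
          + complex_of_real (1 - r\<^sup>2) * of_nat (card Rbasis)"
      by eventually_elim (simp add: trace_curvature_kernel_M_Q algebra_simps)
  qed
  then show ?thesis
    by (simp add: curvature_on_eq)
qed


lemma Q_Pair: "Q (x, y) = (T x + D y, 0)"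
  by (simp add: Q_def)

lemma Q_Qadj_Q: "Q (Qadj (Q v)) = Q v"
proof -
  obtain a b where "v = (a, b)"
    by (cases v)
  then show ?thesis
    using Q_Qadj[of "Q v"] by (simp add: Q_Pair)
qed

lemma partial_isometry_Q: "partial_isometry_on M Q"
  unfolding partial_isometry_on_def
proof (intro conjI ballI impI bop_on_M_Q)
  fix x
  assume x: "x \<in> M" and orth: "\<forall>y\<in>M. Q y = 0 \<longrightarrow> cinner x y = 0"
  define y where "y = x - Qadj (Q x)"
  have "y \<in> M"
    unfolding y_def by (rule complex_vector.subspace_diff[OF subspace_M x Qadj_in_M])
  moreover have "Q y = 0"
    by (simp add: y_def clinear_Q clinear_diff Q_Qadj_Q)
  ultimately have "cinner x y = 0"
    using orth by blast
  then have "Re (cinner x x) = Re (cinner (Q x) (Q x))"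
    by (simp add: y_def cinner_diff_right cinner_Q_Qadj)
  then show "norm (Q x) = norm x"
    by (simp add: Re_cinner_self_norm power2_eq_iff_nonneg)
qed

lemma linear_Pair_zero: "Vector_Spaces.linear (*\<^sub>C) (*\<^sub>C) (\<lambda>b::'a. (0::'a, b))"
  by (rule clinear_imp_linear) (simp add: clinear_def scaleC_Pair)

lemma rank_one_minus_Q_Qadj:
  "rank_on M (\<lambda>v. v - Q (adjoint_on M Q v)) = rank_on UNIV (\<lambda>x. x - T (Ts x))"
proof (rule rank_on_eq_image_inj[OF linear_Pair_zero])
  show "inj_on (\<lambda>b. (0::'a, b)) (cspan ((\<lambda>x. x - T (Ts x)) ` UNIV))"
    by (simp add: inj_on_def)
  have "(\<lambda>v. v - Q (adjoint_on M Q v)) ` M = snd_proj ` M"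
    by (simp add: one_minus_Q_Qadj)
  also have "\<dots> = (\<lambda>b. (0, b)) ` R"
    by (force simp: snd_proj_def M_def)
  finally show "(\<lambda>v. v - Q (adjoint_on M Q v)) ` M = (\<lambda>b. (0, b)) ` (\<lambda>x. x - T (Ts x)) ` UNIV" .
qed

definition ker_Q :: "('a \<times> 'a) set" where
  "ker_Q = {v \<in> M. Q v = 0}"

lemma subspace_ker_Q: "complex_vector.subspace ker_Q"
  using subspace_M
  by (auto simp: complex_vector.subspace_def ker_Q_def clinear_zero[OF clinear_Q] clinear_add[OF clinear_Q]
      clinear_scaleC[OF clinear_Q])

lemma range_one_minus_Qadj_Q: "(\<lambda>v. v - adjoint_on M Q (Q v)) ` M = ker_Q"
proof
  show "(\<lambda>v. v - adjoint_on M Q (Q v)) ` M \<subseteq> ker_Q"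
  proof (rule image_subsetI)
    fix v
    assume "v \<in> M"
    then have "v - Qadj (Q v) \<in> M"
      by (rule complex_vector.subspace_diff[OF subspace_M _ Qadj_in_M])
    moreover have "Q (v - Qadj (Q v)) = 0"
      by (simp add: clinear_Q clinear_diff Q_Qadj_Q)
    ultimately show "v - adjoint_on M Q (Q v) \<in> ker_Q"
      by (simp add: ker_Q_def adjoint_on_M_Q Q_in_M)
  qed
  show "ker_Q \<subseteq> (\<lambda>v. v - adjoint_on M Q (Q v)) ` M"
  proof
    fix u
    assume "u \<in> ker_Q"
    then have u: "u \<in> M" "Q u = 0"
      by (simp_all add: ker_Q_def)
    have "adjoint_on M Q (Q u) = Qadj 0"
      using u complex_vector.subspace_0[OF subspace_M] by (simp add: adjoint_on_M_Q)
    also have "Qadj 0 = 0"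
      by (simp add: Qadj_def zero_prod_def clinear_zero[OF clinear_Ts] clinear_zero[OF clinear_D])
    finally have "u = u - adjoint_on M Q (Q u)"
      by simp
    then show "u \<in> (\<lambda>v. v - adjoint_on M Q (Q v)) ` M"
      using u(1) by (rule image_eqI)
  qed
qed

lemma inj_on_fst_ker_Q: "inj_on fst ker_Q"
proof (rule inj_onI)
  fix u v
  assume uv: "u \<in> ker_Q" "v \<in> ker_Q" "fst u = fst v"
  then have "u - v \<in> ker_Q"
    using subspace_ker_Q by (simp add: complex_vector.subspace_diff)
  moreover obtain d where d: "u - v = (0, d)"
    using uv(3) by (cases u, cases v) auto
  ultimately have "d \<in> R" "D d = 0"
    by (auto simp: ker_Q_def mem_M Q_Pair zero_prod_def clinear_zero[OF clinear_T])
  then obtain w where "d = D w"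
    using range_defect by auto
  then have "d = 0"
    using \<open>D d = 0\<close> defect_square_eq_0_imp by simp
  then show "u = v"
    using d by (simp add: zero_prod_def[symmetric])
qed

lemma fst_ker_Q: "fst ` ker_Q = range (\<lambda>x. x - Ts (T x))"
proof
  show "range (\<lambda>x. x - Ts (T x)) \<subseteq> fst ` ker_Q"
  proof clarify
    fix x
    have "(x, 0) \<in> M"
      by (simp add: mem_M zero_in_R)
    then have "(x, 0) - adjoint_on M Q (Q (x, 0)) \<in> ker_Q"
      using range_one_minus_Qadj_Q by blast
    moreover have "fst ((x, 0) - adjoint_on M Q (Q (x, 0))) = x - Ts (T x)"
      using Q_in_M[of "(x, 0)"] by (simp add: adjoint_on_M_Q Q_Pair Qadj_def clinear_zero[OF clinear_D])
    ultimately show "x - Ts (T x) \<in> fst ` ker_Q"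
      by (simp add: rev_image_eqI)
  qed
  show "fst ` ker_Q \<subseteq> range (\<lambda>x. x - Ts (T x))"
  proof (rule image_subsetI)
    fix v
    assume "v \<in> ker_Q"
    obtain x d where v: "v = (x, d)"
      by (cases v)
    then have "d \<in> R" "T x + D d = 0"
      using \<open>v \<in> ker_Q\<close> by (auto simp: ker_Q_def mem_M Q_Pair zero_prod_def)
    then obtain b where "d = D b"
      using range_defect by auto
    then have "T x = T (Ts b) - b"
      using \<open>T x + D d = 0\<close> by (simp add: defect(3) algebra_simps)
    then have "Ts (T x) = Ts (T (Ts b)) - Ts b"
      by (simp add: clinear_diff[OF clinear_Ts])
    then have "x = (x - Ts b) - Ts (T (x - Ts b))"
      by (simp add: clinear_diff[OF clinear_T] clinear_diff[OF clinear_Ts])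
    then show "fst v \<in> range (\<lambda>x. x - Ts (T x))"
      unfolding v fst_conv by (rule range_eqI)
  qed
qed

lemma rank_one_minus_Qadj_Q:
  "rank_on M (\<lambda>v. v - adjoint_on M Q (Q v)) = rank_on UNIV (\<lambda>x. x - Ts (T x))"
proof (rule rank_on_eq_image_inj[OF clinear_imp_linear, symmetric])
  show "clinear (fst :: 'a \<times> 'a \<Rightarrow> 'a)"
    by (simp add: clinear_def scaleC_prod_def)
  show "inj_on fst (cspan ((\<lambda>v. v - adjoint_on M Q (Q v)) ` M))"
    unfolding range_one_minus_Qadj_Q complex_vector.span_eq_iff[THEN iffD2, OF subspace_ker_Q]
    by (rule inj_on_fst_ker_Q)
  show "(\<lambda>x. x - Ts (T x)) ` UNIV = fst ` (\<lambda>v. v - adjoint_on M Q (Q v)) ` M"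
    by (simp add: range_one_minus_Qadj_Q fst_ker_Q)
qed

end

theorem proposition1:
  fixes T :: "'a::chilbert \<Rightarrow> 'a"
  assumes bounded: "bop_on UNIV T"
    and contraction: "\<forall>x. norm (T x) \<le> norm x"
    and finite_rank: "rank_on UNIV (defect_on UNIV T) \<noteq> \<infinity>"
  defines "M \<equiv> (UNIV :: 'a set) \<times> range (\<lambda>x. x - T (adjoint_on UNIV T x))"
    and "Q \<equiv> (\<lambda>(x, y). (T x + defect_on UNIV T y, 0 :: 'a))"
  shows "partial_isometry_on M Q
    \<and> curvature_on M Q = curvature_on UNIV T
    \<and> rank_on M (\<lambda>v. v - Q (adjoint_on M Q v)) = rank_on UNIV (\<lambda>x. x - T (adjoint_on UNIV T x))
    \<and> rank_on M (\<lambda>v. v - adjoint_on M Q (Q v)) = rank_on UNIV (\<lambda>x. x - adjoint_on UNIV T (T x))"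
proof -
  interpret dilation: finite_defect_contraction T
    using bounded contraction finite_rank by unfold_locales
  have "finite_defect_contraction.M T = M" "finite_defect_contraction.Q T = Q"
    unfolding M_def Q_def dilation.M_def dilation.Q_def by simp_all
  then show ?thesis
    using dilation.partial_isometry_Q dilation.curvature_Q dilation.rank_one_minus_Q_Qadj
      dilation.rank_one_minus_Qadj_Q
    by simp
qed

end
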